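(* Let $R$ be a commutative ring and $n\ge3$. Let $(v_1,w_1),(v_2,w_2)$ be points of the unit sphere $U_{2n-1}(R)=\{(v,w)\in H(R^n): v\cdot w^{\intercal}=1\}$. Then $(v_1,w_1)$ and $(v_2,w_2)$ lie in the same $\operatorname{Epin}_{2n}(R)$-orbit if and only if $v_1$ and $v_2$ lie in the same $E_n(R)$-orbit (i.e. $v_2=v_1\varepsilon$ for some $\varepsilon\in E_n(R)$). Consequently $v\mapsto(v,w)$ (for any $w$ with $v\cdot w^{\intercal}=1$) induces a bijection $$Um_n(R)/E_n(R)\;\longleftrightarrow\;U_{2n-1}(R)/\operatorname{Epin}_{2n}(R)=U_{2n-1}(R)/EO_{2n}(R).$$
   Context: $Um_n(R)$ is the set of unimodular rows $v\in R^n$ (there is $w\in R^n$ with $v\cdot w^{\intercal}=1$); $E_n(R)\subseteq GL_n(R)$, generated by elementary matrices $I+\lambda e_{ij}$ ($i\ne j$), acts on rows on the right. $H(R^n)=R^n\oplus(R^n)^*$ with $q(v,w)=v\cdot w^{\intercal}$ and basis $e_1,\dots,e_n,f_1,\dots,f_n$. Let $\partial=(1\ n+1)\cdots(n\ 2n)$ and $E^o_{ij}(\lambda)=I_{2n}+\lambda(e_{ij}-e_{\partial(j)\partial(i)})$ for $1\le i\ne j\le 2n$; $EO_{2n}(R)$ is the group they generate, acting on $H(R^n)$ via matrices in the ordered basis $(e_1,\dots,e_n,f_1,\dots,f_n)$. $\mathrm{Cl}=\mathrm{Cl}_0\oplus\mathrm{Cl}_1$ is the Clifford algebra of $(H(R^n),q)$,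 $x\mapsto x^*$ its canonical involution (identity on $H(R^n)$). $\operatorname{Spin}_{2n}(R)=\{x\in\mathrm{Cl}_0: xx^*=1,\ xH(R^n)x^{-1}=H(R^n)\}$ acts on $H(R^n)$ by $\pi(g)(u)=gug^{-1}$, and $\operatorname{Epin}_{2n}(R)=\pi^{-1}(EO_{2n}(R))$. *)

theory Defs
  imports "Jordan_Normal_Form.Matrix"
begin

definition rowmul :: "'a::comm_ring_1 vec \<Rightarrow> 'a mat \<Rightarrow> 'a vec" where
  "rowmul v A = transpose_mat A *\<^sub>v v"   (* the row vector  v A *)

inductive_set gen_group :: "nat \<Rightarrow> 'a::comm_ring_1 mat set \<Rightarrow> 'a mat set"
  for n :: nat and S :: "'a mat set" where
  gg_one: "1\<^sub>m n \<in> gen_group n S"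
| gg_mult: "A \<in> gen_group n S \<Longrightarrow> s \<in> S \<Longrightarrow> A * s \<in> gen_group n S"
| gg_inv: "A \<in> gen_group n S \<Longrightarrow> B \<in> carrier_mat n n \<Longrightarrow> A * B = 1\<^sub>m n
            \<Longrightarrow> B \<in> gen_group n S"

(* matrix unit e_ij of size m (0-indexed) *)
definition emat :: "nat \<Rightarrow> nat \<Rightarrow> nat \<Rightarrow> 'a::comm_ring_1 mat" where
  "emat m i j = mat m m (\<lambda>(k,l). if k = i \<and> l = j then 1 else 0)"

definition elem_gens :: "nat \<Rightarrow> 'a::comm_ring_1 mat set" where
  "elem_gens n = {1\<^sub>m n + c \<cdot>\<^sub>m emat n i j | i j c. i < n \<and> j < n \<and> i \<noteq> j}"

definition En :: "nat \<Rightarrow> 'a::comm_ring_1 mat set" where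
  "En n = gen_group n (elem_gens n)"

(* the involution \<partial> = (1 n+1)...(n 2n), 0-indexed on {0..<2n} *)
definition hpart :: "nat \<Rightarrow> nat \<Rightarrow> nat" where
  "hpart n k = (if k < n then k + n else k - n)"

definition eo_gens :: "nat \<Rightarrow> 'a::comm_ring_1 mat set" where
  "eo_gens n = {1\<^sub>m (2*n) + c \<cdot>\<^sub>m (emat (2*n) i j - emat (2*n) (hpart n j) (hpart n i))
               | i j c. i < 2*n \<and> j < 2*n \<and> i \<noteq> j}"

definition EO :: "nat \<Rightarrow> 'a::comm_ring_1 mat set" where
  "EO n = gen_group (2*n) (eo_gens n)"

definition Um :: "nat \<Rightarrow> 'a::comm_ring_1 vec set" where
  "Um n = {v \<in> carrier_vec n. \<exists>w \<in> carrier_vec n. v \<bullet> w = 1}"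

definition E_orbit :: "nat \<Rightarrow> 'a::comm_ring_1 vec \<Rightarrow> 'a vec set" where
  "E_orbit n v = {rowmul v \<epsilon> | \<epsilon>. \<epsilon> \<in> En n}"

(* elements (v,w) of H(R^n) are coordinate vectors v @ w of length 2n in the basis
   e_1..e_n,f_1..f_n; quadratic form q(v,w) = v . w *)
definition qform :: "nat \<Rightarrow> 'a::comm_ring_1 vec \<Rightarrow> 'a" where
  "qform n u = (\<Sum>i<n. u $ i * u $ (n + i))"

definition USph :: "nat \<Rightarrow> 'a::comm_ring_1 vec set" where
  "USph n = {v @\<^sub>v w | v w. v \<in> carrier_vec n \<and> w \<in> carrier_vec n \<and> v \<bullet> w = 1}"

definition EO_orbit :: "nat \<Rightarrow> 'a::comm_ring_1 vec \<Rightarrow> 'a vec set" where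
  "EO_orbit n p = {M *\<^sub>v p | M. M \<in> EO n}"

section \<open>Clifford algebra of (H(R^n), q) as the free algebra modulo the Clifford ideal\<close>

(* noncommutative polynomials in the generators 0..<2n (= e_1..e_n,f_1..f_n):
   coefficient functions on words *)
type_synonym 'a fa = "nat list \<Rightarrow> 'a"

definition fa_free :: "nat \<Rightarrow> 'a::comm_ring_1 fa set" where
  "fa_free n = {p. finite {w. p w \<noteq> 0} \<and> (\<forall>w. p w \<noteq> 0 \<longrightarrow> (\<forall>k \<in> set w. k < 2*n))}"

definition fa_mult :: "'a::comm_ring_1 fa \<Rightarrow> 'a fa \<Rightarrow> 'a fa" (infixl \<open>\<otimes>\<^sub>f\<close> 70) where
  "fa_mult p q = (\<lambda>w. \<Sum>i\<le>length w. p (take i w) * q (drop i w))"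

definition fa_one :: "'a::comm_ring_1 fa" where
  "fa_one = (\<lambda>w. if w = [] then 1 else 0)"

definition fa_iota :: "nat \<Rightarrow> 'a::comm_ring_1 vec \<Rightarrow> 'a fa" where
  "fa_iota n u = (\<lambda>w. case w of [k] \<Rightarrow> if k < 2*n then u $ k else 0 | _ \<Rightarrow> 0)"

(* reversal of words: induces the canonical involution * of Cl *)
definition fa_star :: "'a::comm_ring_1 fa \<Rightarrow> 'a fa" where
  "fa_star p = (\<lambda>w. p (rev w))"

inductive_set cl_ideal :: "nat \<Rightarrow> 'a::comm_ring_1 fa set" for n :: nat where
  ci_zero: "(\<lambda>w. 0) \<in> cl_ideal n"
| ci_add: "a \<in> cl_ideal n \<Longrightarrow> b \<in> cl_ideal n \<Longrightarrow> (\<lambda>w. a w + b w) \<in> cl_ideal n"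
| ci_gen: "a \<in> fa_free n \<Longrightarrow> b \<in> fa_free n \<Longrightarrow> u \<in> carrier_vec (2*n) \<Longrightarrow>
     a \<otimes>\<^sub>f (\<lambda>w. (fa_iota n u \<otimes>\<^sub>f fa_iota n u) w - qform n u * fa_one w) \<otimes>\<^sub>f b \<in> cl_ideal n"

definition cl_eq :: "nat \<Rightarrow> 'a::comm_ring_1 fa \<Rightarrow> 'a fa \<Rightarrow> bool" where
  "cl_eq n x y \<longleftrightarrow> (\<lambda>w. x w - y w) \<in> cl_ideal n"

(* x represents an element of Spin_{2n}(R), with inverse represented by y:
   x \<in> Cl_0 (even representative), x x* = 1, x invertible with x^{-1} = y,
   and x H x^{-1} = H *)
definition spin_rep :: "nat \<Rightarrow> 'a::comm_ring_1 fa \<Rightarrow> 'a fa \<Rightarrow> bool" where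
  "spin_rep n x y \<longleftrightarrow>
     x \<in> fa_free n \<and> y \<in> fa_free n \<and>
     (\<forall>w. x w \<noteq> 0 \<longrightarrow> even (length w)) \<and>
     cl_eq n (x \<otimes>\<^sub>f fa_star x) fa_one \<and>
     cl_eq n (x \<otimes>\<^sub>f y) fa_one \<and> cl_eq n (y \<otimes>\<^sub>f x) fa_one \<and>
     (\<forall>u \<in> carrier_vec (2*n). \<exists>u' \<in> carrier_vec (2*n).
         cl_eq n (x \<otimes>\<^sub>f fa_iota n u \<otimes>\<^sub>f y) (fa_iota n u')) \<and>
     (\<forall>u' \<in> carrier_vec (2*n). \<exists>u \<in> carrier_vec (2*n).
         cl_eq n (x \<otimes>\<^sub>f fa_iota n u \<otimes>\<^sub>f y) (fa_iota n u'))"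

(* x (with inverse y) lies in Epin_{2n}(R) and M is the matrix of \<pi>(x) *)
definition epin_mat :: "nat \<Rightarrow> 'a::comm_ring_1 fa \<Rightarrow> 'a fa \<Rightarrow> 'a mat \<Rightarrow> bool" where
  "epin_mat n x y M \<longleftrightarrow> spin_rep n x y \<and> M \<in> carrier_mat (2*n) (2*n) \<and> M \<in> EO n \<and>
     (\<forall>u \<in> carrier_vec (2*n). cl_eq n (x \<otimes>\<^sub>f fa_iota n u \<otimes>\<^sub>f y) (fa_iota n (M *\<^sub>v u)))"

definition Epin_orbit :: "nat \<Rightarrow> 'a::comm_ring_1 vec \<Rightarrow> 'a vec set" where
  "Epin_orbit n p = {M *\<^sub>v p | M. \<exists>x y. epin_mat n x y M}"

end

(*
  Write a point of the unit sphere as (v, w) with v . w = 1.  Every generator of EO_2n(R)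
  changes v by right multiplication with an element of E_n(R): an elementary matrix, the
  identity, or, for the generators mixing v with w, the transvection
  v |-> v + c (v . w) y with y = w_j e_i - w_i e_j orthogonal to w; for n >= 3 the latter lies
  in E_n(R) by Suslin's commutator argument.  Conversely, E_n(R) acting on v is realised
  inside EO_2n(R), and the generators pairing e_(n+i) with e_j fix v and translate w by
  c (v_j e_i - v_i e_j); these translations span all d with v . d = 0, so (v, w) and (v, w')
  are EO-equivalent whenever both lie on the sphere.  Finally every generator of EO_2n(R)
  lifts to a unit 1 + c a b of the Clifford algebra, a and b being isotropic basis vectors
  with ab + ba = 0, so the Epin- and EO-orbits coincide.
*)

theory Submission
  imports Defs
begin

section \<open>The hyperbolic form\<close>

lemma hpart_less: "k < 2*n \<Longrightarrow> hpart n k < 2*n"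
  and hpart_hpart: "k < 2*n \<Longrightarrow> hpart n (hpart n k) = k"
  and hpart_neq: "k < 2*n \<Longrightarrow> hpart n k \<noteq> k"
  and hpart_eq_iff: "k < 2*n \<Longrightarrow> l < 2*n \<Longrightarrow> hpart n k = hpart n l \<longleftrightarrow> k = l"
  by (auto simp: hpart_def)

definition qbil :: "nat \<Rightarrow> 'a::comm_ring_1 vec \<Rightarrow> 'a vec \<Rightarrow> 'a" where
  "qbil n u v = qform n (u + v) - qform n u - qform n v"

lemma qbil_sum:
  assumes u: "u \<in> carrier_vec (2*n)" and v: "v \<in> carrier_vec (2*n)"
  shows "qbil n u v = (\<Sum>k<n. u $ k * v $ (n + k) + v $ k * u $ (n + k))"
proof -
  have "qbil n u v = (\<Sum>k<n. (u $ k + v $ k) * (u $ (n + k) + v $ (n + k))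
      - u $ k * u $ (n + k) - v $ k * v $ (n + k))"
    unfolding qbil_def qform_def using u v by (simp add: sum_subtractf)
  also have "\<dots> = (\<Sum>k<n. u $ k * v $ (n + k) + v $ k * u $ (n + k))"
    by (rule sum.cong) (auto simp: algebra_simps)
  finally show ?thesis .
qed

lemma qbil_commute: "u \<in> carrier_vec (2*n) \<Longrightarrow> v \<in> carrier_vec (2*n) \<Longrightarrow> qbil n u v = qbil n v u"
  unfolding qbil_def by (simp add: comm_add_vec[of _ "2*n"] algebra_simps)

lemma qbil_unit_vec:
  assumes l: "l < 2*n" and u: "u \<in> carrier_vec (2*n)"
  shows "qbil n (unit_vec (2*n) l) u = u $ hpart n l"
proof (cases "l < n")
  case True
  have "qbil n (unit_vec (2*n) l) u = (\<Sum>k<n. if k = l then u $ (n + k) else 0)"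
    unfolding qbil_sum[OF unit_vec_carrier u] using True by (intro sum.cong) auto
  then show ?thesis using True by (simp add: hpart_def add.commute)
next
  case False
  have "qbil n (unit_vec (2*n) l) u = (\<Sum>k<n. if k = l - n then u $ k else 0)"
    unfolding qbil_sum[OF unit_vec_carrier u] using False l by (intro sum.cong) auto
  then show ?thesis using False l by (simp add: hpart_def)
qed

lemma qform_unit_vec: "qform n (unit_vec (2*n) l :: 'a::comm_ring_1 vec) = 0"
  unfolding qform_def by (rule sum.neutral) (auto simp: unit_vec_def)

lemma qform_smult: "v \<in> carrier_vec (2*n) \<Longrightarrow> qform n (a \<cdot>\<^sub>v v) = a * a * qform n v"
  unfolding qform_def by (simp add: sum_distrib_left algebra_simps)

lemma qform_add: "qform n (u + v) = qform n u + qform n v + qbil n u v"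
  by (simp add: qbil_def)

lemma qbil_add_right:
  "u \<in> carrier_vec (2*n) \<Longrightarrow> v \<in> carrier_vec (2*n) \<Longrightarrow> w \<in> carrier_vec (2*n) \<Longrightarrow>
    qbil n u (v + w) = qbil n u v + qbil n u w"
  by (simp add: qbil_sum sum.distrib algebra_simps)

lemma qbil_smult_right:
  "u \<in> carrier_vec (2*n) \<Longrightarrow> v \<in> carrier_vec (2*n) \<Longrightarrow> qbil n u (a \<cdot>\<^sub>v v) = a * qbil n u v"
  by (simp add: qbil_sum sum_distrib_left algebra_simps)

lemma append_carrier_vec_double: "v \<in> carrier_vec n \<Longrightarrow> w \<in> carrier_vec n \<Longrightarrow> v @\<^sub>v w \<in> carrier_vec (2*n)"
  using append_carrier_vec[of v n w n] by (simp add: mult_2)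

lemma qform_append: "v \<in> carrier_vec n \<Longrightarrow> w \<in> carrier_vec n \<Longrightarrow> qform n (v @\<^sub>v w) = v \<bullet> w"
  unfolding qform_def scalar_prod_def by (simp add: atLeast0LessThan)

section \<open>The Clifford algebra\<close>

definition fa_shift :: "'a fa \<Rightarrow> nat \<Rightarrow> 'a fa" where
  "fa_shift p a = (\<lambda>u. p (a # u))"

lemma fa_mult_Nil: "(p \<otimes>\<^sub>f q) [] = p [] * (q [] :: 'a::comm_ring_1)"
  by (simp add: fa_mult_def)

lemma fa_mult_Cons: "(p \<otimes>\<^sub>f q) (a # w) = p [] * q (a # w) + (fa_shift p a \<otimes>\<^sub>f q) w"
  for p q :: "'a::comm_ring_1 fa"
  unfolding fa_mult_def fa_shift_def
  by (simp add: sum.atMost_Suc_shift del: sum.atMost_Suc)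

lemma fa_shift_mult: "fa_shift (p \<otimes>\<^sub>f q) a = (\<lambda>u. p [] * fa_shift q a u + (fa_shift p a \<otimes>\<^sub>f q) u)"
  for p q :: "'a::comm_ring_1 fa"
  by (rule ext) (simp add: fa_shift_def fa_mult_Cons)

lemma fa_mult_linear_left:
  "((\<lambda>u. c * f u + g u) \<otimes>\<^sub>f r) w = c * (f \<otimes>\<^sub>f r) w + (g \<otimes>\<^sub>f r) w"
  for f g r :: "'a::comm_ring_1 fa"
  unfolding fa_mult_def by (simp add: sum.distrib sum_distrib_left algebra_simps)

lemma fa_mult_assoc_at: "((p \<otimes>\<^sub>f q) \<otimes>\<^sub>f r) w = (p \<otimes>\<^sub>f (q \<otimes>\<^sub>f r)) w"
  for p q r :: "'a::comm_ring_1 fa"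
proof (induction w arbitrary: p q)
  case Nil
  then show ?case by (simp add: fa_mult_Nil)
next
  case (Cons a w)
  have "((p \<otimes>\<^sub>f q) \<otimes>\<^sub>f r) (a # w) = p [] * q [] * r (a # w)
      + (p [] * (fa_shift q a \<otimes>\<^sub>f r) w + ((fa_shift p a \<otimes>\<^sub>f q) \<otimes>\<^sub>f r) w)"
    by (simp add: fa_mult_Cons fa_mult_Nil fa_shift_mult fa_mult_linear_left)
  also have "\<dots> = (p \<otimes>\<^sub>f (q \<otimes>\<^sub>f r)) (a # w)"
    using Cons.IH by (simp add: fa_mult_Cons fa_mult_Nil algebra_simps)
  finally show ?case .
qed

lemma fa_mult_assoc: "(p \<otimes>\<^sub>f q) \<otimes>\<^sub>f r = p \<otimes>\<^sub>f (q \<otimes>\<^sub>f r)"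
  for p q r :: "'a::comm_ring_1 fa"
  using fa_mult_assoc_at by blast

lemma fa_mult_distrib_right: "(\<lambda>w. p w + q w) \<otimes>\<^sub>f r = (\<lambda>w. (p \<otimes>\<^sub>f r) w + (q \<otimes>\<^sub>f r) w)"
  for p q r :: "'a::comm_ring_1 fa"
  unfolding fa_mult_def by (rule ext) (simp add: sum.distrib algebra_simps)

lemma fa_mult_distrib_left: "r \<otimes>\<^sub>f (\<lambda>w. p w + q w) = (\<lambda>w. (r \<otimes>\<^sub>f p) w + (r \<otimes>\<^sub>f q) w)"
  for p q r :: "'a::comm_ring_1 fa"
  unfolding fa_mult_def by (rule ext) (simp add: sum.distrib algebra_simps)

lemma fa_mult_zero_left: "(\<lambda>w. 0) \<otimes>\<^sub>f r = (\<lambda>w. 0 :: 'a::comm_ring_1)"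
  unfolding fa_mult_def by simp

lemma fa_mult_zero_right: "r \<otimes>\<^sub>f (\<lambda>w. 0) = (\<lambda>w. 0 :: 'a::comm_ring_1)"
  unfolding fa_mult_def by simp

lemma fa_one_mult: "fa_one \<otimes>\<^sub>f p = (p :: 'a::comm_ring_1 fa)"
proof
  show "(fa_one \<otimes>\<^sub>f p) w = p w" for w
    unfolding fa_mult_def fa_one_def by (subst sum.remove[of _ 0]) auto
qed

lemma fa_mult_one: "p \<otimes>\<^sub>f fa_one = (p :: 'a::comm_ring_1 fa)"
proof
  show "(p \<otimes>\<^sub>f fa_one) w = p w" for w
    unfolding fa_mult_def fa_one_def by (subst sum.remove[of _ "length w"]) auto
qed

lemma fa_star_mult: "fa_star (p \<otimes>\<^sub>f q) = fa_star q \<otimes>\<^sub>f fa_star p"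
  for p q :: "'a::comm_ring_1 fa"
proof (rule ext)
  fix w :: "nat list"
  have "fa_star (p \<otimes>\<^sub>f q) w
      = (\<Sum>i\<le>length w. p (rev (drop (length w - i) w)) * q (rev (take (length w - i) w)))"
    unfolding fa_star_def fa_mult_def by (simp add: take_rev drop_rev)
  also have "\<dots> = (\<Sum>i\<le>length w. p (rev (drop i w)) * q (rev (take i w)))"
    by (rule sum.reindex_bij_witness[of _ "\<lambda>i. length w - i" "\<lambda>i. length w - i"]) auto
  also have "\<dots> = (fa_star q \<otimes>\<^sub>f fa_star p) w"
    unfolding fa_star_def fa_mult_def by (simp add: mult.commute)
  finally show "fa_star (p \<otimes>\<^sub>f q) w = (fa_star q \<otimes>\<^sub>f fa_star p) w" .
qed

lemma fa_free_mult:
  assumes "p \<in> fa_free n" "q \<in> fa_free n"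
  shows "p \<otimes>\<^sub>f q \<in> fa_free n"
proof -
  have split: "\<exists>i. p (take i w) \<noteq> 0 \<and> q (drop i w) \<noteq> 0" if "(p \<otimes>\<^sub>f q) w \<noteq> 0" for w
  proof -
    from that obtain i where "p (take i w) * q (drop i w) \<noteq> 0"
      unfolding fa_mult_def using sum.not_neutral_contains_not_neutral by blast
    then show ?thesis by (metis mult_zero_left mult_zero_right)
  qed
  have "{w. (p \<otimes>\<^sub>f q) w \<noteq> 0} \<subseteq> (\<lambda>(a, b). a @ b) ` ({w. p w \<noteq> 0} \<times> {w. q w \<noteq> 0})"
  proof
    fix w assume "w \<in> {w. (p \<otimes>\<^sub>f q) w \<noteq> 0}"
    with split obtain i where "p (take i w) \<noteq> 0" "q (drop i w) \<noteq> 0" by blast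
    then show "w \<in> (\<lambda>(a, b). a @ b) ` ({w. p w \<noteq> 0} \<times> {w. q w \<noteq> 0})"
      by (intro image_eqI[of _ _ "(take i w, drop i w)"]) auto
  qed
  then have "finite {w. (p \<otimes>\<^sub>f q) w \<noteq> 0}"
    by (rule finite_subset) (use assms in \<open>auto simp: fa_free_def\<close>)
  moreover have "\<forall>k\<in>set w. k < 2*n" if "(p \<otimes>\<^sub>f q) w \<noteq> 0" for w
  proof -
    from split[OF that] obtain i where "p (take i w) \<noteq> 0" "q (drop i w) \<noteq> 0" by blast
    then have "\<forall>k\<in>set (take i w) \<union> set (drop i w). k < 2*n"
      using assms by (auto simp: fa_free_def)
    then show ?thesis by (metis append_take_drop_id set_append)
  qed
  ultimately show ?thesis by (simp add: fa_free_def)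
qed

lemma cl_ideal_mult_left: "p \<in> cl_ideal n \<Longrightarrow> c \<in> fa_free n \<Longrightarrow> c \<otimes>\<^sub>f p \<in> cl_ideal n"
proof (induction p rule: cl_ideal.induct)
  case (ci_gen a b u)
  then have "(c \<otimes>\<^sub>f a) \<otimes>\<^sub>f (\<lambda>w. (fa_iota n u \<otimes>\<^sub>f fa_iota n u) w - qform n u * fa_one w) \<otimes>\<^sub>f b
      \<in> cl_ideal n"
    by (intro cl_ideal.ci_gen fa_free_mult)
  then show ?case by (simp add: fa_mult_assoc)
qed (simp_all add: fa_mult_zero_right fa_mult_distrib_left cl_ideal.intros)

lemma cl_ideal_mult_right: "p \<in> cl_ideal n \<Longrightarrow> c \<in> fa_free n \<Longrightarrow> p \<otimes>\<^sub>f c \<in> cl_ideal n"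
proof (induction p rule: cl_ideal.induct)
  case (ci_gen a b u)
  then have "a \<otimes>\<^sub>f (\<lambda>w. (fa_iota n u \<otimes>\<^sub>f fa_iota n u) w - qform n u * fa_one w) \<otimes>\<^sub>f (b \<otimes>\<^sub>f c)
      \<in> cl_ideal n"
    by (intro cl_ideal.ci_gen fa_free_mult)
  then show ?case by (simp add: fa_mult_assoc)
qed (simp_all add: fa_mult_zero_left fa_mult_distrib_right cl_ideal.intros)

typedef 'a free_alg = "UNIV :: 'a fa set" by simp

lemmas free_alg_eqI = Rep_free_alg_inject[THEN iffD1]

instantiation free_alg :: (comm_ring_1) ring_1
begin

definition "zero_free_alg = Abs_free_alg (\<lambda>w. 0)"
definition "one_free_alg = Abs_free_alg fa_one"
definition "plus_free_alg x y = Abs_free_alg (\<lambda>w. Rep_free_alg x w + Rep_free_alg y w)"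
definition "minus_free_alg x y = Abs_free_alg (\<lambda>w. Rep_free_alg x w - Rep_free_alg y w)"
definition "uminus_free_alg x = Abs_free_alg (\<lambda>w. - Rep_free_alg x w)"
definition "times_free_alg x y = Abs_free_alg (Rep_free_alg x \<otimes>\<^sub>f Rep_free_alg y)"

lemma Rep_free_alg_ops:
  "Rep_free_alg (0::'a free_alg) = (\<lambda>w. 0)"
  "Rep_free_alg (1::'a free_alg) = fa_one"
  "Rep_free_alg (x + y) = (\<lambda>w. Rep_free_alg x w + Rep_free_alg y w)"
  "Rep_free_alg (x - y) = (\<lambda>w. Rep_free_alg x w - Rep_free_alg y w)"
  "Rep_free_alg (- x) = (\<lambda>w. - Rep_free_alg x w)"
  "Rep_free_alg (x * y) = Rep_free_alg x \<otimes>\<^sub>f Rep_free_alg y"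
  by (simp_all add: zero_free_alg_def one_free_alg_def plus_free_alg_def minus_free_alg_def
      uminus_free_alg_def times_free_alg_def Abs_free_alg_inverse)

instance
proof
  show "(0::'a free_alg) \<noteq> 1"
  proof
    assume "(0::'a free_alg) = 1"
    then have "Rep_free_alg (0::'a free_alg) [] = Rep_free_alg (1::'a free_alg) []" by simp
    then show False by (simp add: Rep_free_alg_ops fa_one_def)
  qed
qed (rule free_alg_eqI; simp add: Rep_free_alg_ops fa_mult_assoc fa_one_mult fa_mult_one
      fa_mult_distrib_left fa_mult_distrib_right fa_mult_zero_left fa_mult_zero_right algebra_simps)+

end

definition scal :: "'a::comm_ring_1 \<Rightarrow> 'a free_alg" where
  "scal c = Abs_free_alg (\<lambda>w. if w = [] then c else 0)"

lemma Rep_scal: "Rep_free_alg (scal c) = (\<lambda>w. if w = [] then c else 0)"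
  by (simp add: scal_def Abs_free_alg_inverse)

lemma Rep_scal_mult: "Rep_free_alg (scal c * x) = (\<lambda>w. c * Rep_free_alg x w)"
proof
  show "Rep_free_alg (scal c * x) w = c * Rep_free_alg x w" for w
    unfolding Rep_free_alg_ops Rep_scal fa_mult_def by (subst sum.remove[of _ 0]) auto
qed

lemma Rep_mult_scal: "Rep_free_alg (x * scal c) = (\<lambda>w. c * Rep_free_alg x w)"
proof
  show "Rep_free_alg (x * scal c) w = c * Rep_free_alg x w" for w
    unfolding Rep_free_alg_ops Rep_scal fa_mult_def
    by (subst sum.remove[of _ "length w"]) (auto simp: mult.commute)
qed

lemma scal_commute: "x * scal c = scal c * x"
  by (rule free_alg_eqI) (simp add: Rep_scal_mult Rep_mult_scal)

lemma scal_commute_left: "x * (scal c * y) = scal c * (x * y)"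
  by (metis mult.assoc scal_commute)

lemma scal_mult: "scal c * scal d = scal (c * d)"
  by (rule free_alg_eqI) (auto simp: Rep_scal_mult Rep_scal)

lemma scal_mult_left: "scal c * (scal d * x) = scal (c * d) * x"
  by (metis mult.assoc scal_mult)

lemma scal_add: "scal (c + d) = scal c + scal d"
  and scal_diff: "scal (c - d) = scal c - scal d"
  and scal_minus: "scal (- c) = - scal c"
  and scal_one: "scal 1 = 1"
  and scal_zero: "scal 0 = 0"
  by (rule free_alg_eqI; auto simp: Rep_free_alg_ops Rep_scal fa_one_def)+

definition star :: "'a::comm_ring_1 free_alg \<Rightarrow> 'a free_alg" where
  "star x = Abs_free_alg (fa_star (Rep_free_alg x))"

lemma Rep_star: "Rep_free_alg (star x) = fa_star (Rep_free_alg x)"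
  by (simp add: star_def Abs_free_alg_inverse)

lemma star_mult: "star (x * y) = star y * star x"
  by (rule free_alg_eqI) (simp add: Rep_star Rep_free_alg_ops fa_star_mult)

lemma star_add: "star (x + y) = star x + star y"
  and star_one: "star 1 = 1"
  and star_scal: "star (scal c) = scal c"
  by (rule free_alg_eqI; simp add: Rep_star Rep_free_alg_ops Rep_scal fa_star_def fa_one_def)+

definition iota :: "nat \<Rightarrow> 'a::comm_ring_1 vec \<Rightarrow> 'a free_alg" where
  "iota n u = Abs_free_alg (fa_iota n u)"

lemma Rep_iota: "Rep_free_alg (iota n u) = fa_iota n u"
  by (simp add: iota_def Abs_free_alg_inverse)

lemma star_iota: "star (iota n u) = iota n u"
  by (rule free_alg_eqI, rule ext) (simp add: Rep_star Rep_iota fa_star_def fa_iota_def split: list.splits)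

lemma iota_add: "u \<in> carrier_vec (2*n) \<Longrightarrow> v \<in> carrier_vec (2*n) \<Longrightarrow> iota n (u + v) = iota n u + iota n v"
  by (rule free_alg_eqI, rule ext) (simp add: Rep_iota Rep_free_alg_ops fa_iota_def split: list.splits)

lemma iota_diff: "u \<in> carrier_vec (2*n) \<Longrightarrow> v \<in> carrier_vec (2*n) \<Longrightarrow> iota n (u - v) = iota n u - iota n v"
  by (rule free_alg_eqI, rule ext) (simp add: Rep_iota Rep_free_alg_ops fa_iota_def split: list.splits)

lemma iota_smult: "u \<in> carrier_vec (2*n) \<Longrightarrow> iota n (c \<cdot>\<^sub>v u) = scal c * iota n u"
  by (rule free_alg_eqI, rule ext) (simp add: Rep_iota Rep_scal_mult fa_iota_def split: list.splits)

definition free_elems :: "nat \<Rightarrow> 'a::comm_ring_1 free_alg set" where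
  "free_elems n = {x. Rep_free_alg x \<in> fa_free n}"

lemma free_elems_mult [intro]: "x \<in> free_elems n \<Longrightarrow> y \<in> free_elems n \<Longrightarrow> x * y \<in> free_elems n"
  by (simp add: free_elems_def Rep_free_alg_ops fa_free_mult)

lemma free_elems_add [intro]: "x \<in> free_elems n \<Longrightarrow> y \<in> free_elems n \<Longrightarrow> x + y \<in> free_elems n"
proof -
  assume xy: "x \<in> free_elems n" "y \<in> free_elems n"
  have "{w. Rep_free_alg x w + Rep_free_alg y w \<noteq> 0}
      \<subseteq> {w. Rep_free_alg x w \<noteq> 0} \<union> {w. Rep_free_alg y w \<noteq> 0}" by auto
  then have "finite {w. Rep_free_alg x w + Rep_free_alg y w \<noteq> 0}"
    by (rule finite_subset) (use xy in \<open>simp add: free_elems_def fa_free_def\<close>)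
  moreover have "Rep_free_alg x w \<noteq> 0 \<or> Rep_free_alg y w \<noteq> 0"
    if "Rep_free_alg x w + Rep_free_alg y w \<noteq> 0" for w
    using that by auto
  ultimately show ?thesis
    using xy by (auto simp: free_elems_def fa_free_def Rep_free_alg_ops)
qed

lemma free_elems_scal [intro]: "scal c \<in> free_elems n"
proof -
  have "{w. Rep_free_alg (scal c) w \<noteq> 0} \<subseteq> {[]}" by (auto simp: Rep_scal)
  then show ?thesis unfolding free_elems_def fa_free_def by (auto intro: finite_subset simp: Rep_scal)
qed

lemma free_elems_one [intro]: "1 \<in> free_elems n"
  by (metis free_elems_scal scal_one)

lemma free_elems_uminus [intro]: "x \<in> free_elems n \<Longrightarrow> - x \<in> free_elems n"
  by (simp add: free_elems_def fa_free_def Rep_free_alg_ops)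

lemma free_elems_iota [intro]: "iota n u \<in> free_elems n"
proof -
  have nz: "\<exists>k<2*n. w = [k]" if "Rep_free_alg (iota n u) w \<noteq> 0" for w
    using that by (auto simp: Rep_iota fa_iota_def split: list.splits if_splits)
  then have "{w. Rep_free_alg (iota n u) w \<noteq> 0} \<subseteq> (\<lambda>k. [k]) ` {..<2*n}"
    by blast
  then show ?thesis unfolding free_elems_def fa_free_def
    using nz by (auto intro: finite_subset)
qed

lemma free_elems_star [intro]: "x \<in> free_elems n \<Longrightarrow> star x \<in> free_elems n"
proof -
  assume x: "x \<in> free_elems n"
  have "{w. Rep_free_alg (star x) w \<noteq> 0} = rev ` {w. Rep_free_alg x w \<noteq> 0}"
    by (force simp: Rep_star fa_star_def)
  then show ?thesis
    using x by (auto simp: free_elems_def fa_free_def Rep_star fa_star_def)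
qed

definition Cl_ideal :: "nat \<Rightarrow> 'a::comm_ring_1 free_alg set" where
  "Cl_ideal n = {x. Rep_free_alg x \<in> cl_ideal n}"

lemma Cl_ideal_zero [intro]: "0 \<in> Cl_ideal n"
  by (simp add: Cl_ideal_def Rep_free_alg_ops cl_ideal.ci_zero)

lemma Cl_ideal_add [intro]: "x \<in> Cl_ideal n \<Longrightarrow> y \<in> Cl_ideal n \<Longrightarrow> x + y \<in> Cl_ideal n"
  by (simp add: Cl_ideal_def Rep_free_alg_ops cl_ideal.ci_add)

lemma Cl_ideal_mult_left [intro]: "c \<in> free_elems n \<Longrightarrow> x \<in> Cl_ideal n \<Longrightarrow> c * x \<in> Cl_ideal n"
  by (simp add: Cl_ideal_def free_elems_def Rep_free_alg_ops cl_ideal_mult_left)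

lemma Cl_ideal_mult_right [intro]: "x \<in> Cl_ideal n \<Longrightarrow> c \<in> free_elems n \<Longrightarrow> x * c \<in> Cl_ideal n"
  by (simp add: Cl_ideal_def free_elems_def Rep_free_alg_ops cl_ideal_mult_right)

lemma Cl_ideal_uminus [intro]: "x \<in> Cl_ideal n \<Longrightarrow> - x \<in> Cl_ideal n"
  using Cl_ideal_mult_left[of "- 1" n x] by auto

lemma Cl_ideal_diff [intro]: "x \<in> Cl_ideal n \<Longrightarrow> y \<in> Cl_ideal n \<Longrightarrow> x - y \<in> Cl_ideal n"
  by (metis Cl_ideal_add Cl_ideal_uminus diff_conv_add_uminus)

lemma Cl_ideal_sandwich: "x \<in> free_elems n \<Longrightarrow> y \<in> free_elems n \<Longrightarrow> r \<in> Cl_ideal n \<Longrightarrow> x * r * y \<in> Cl_ideal n"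
  by (intro Cl_ideal_mult_left Cl_ideal_mult_right)

lemma Cl_ideal_square:
  assumes "u \<in> carrier_vec (2*n)"
  shows "iota n u * iota n u - scal (qform n u) \<in> Cl_ideal n"
proof -
  have "fa_one \<otimes>\<^sub>f (\<lambda>w. (fa_iota n u \<otimes>\<^sub>f fa_iota n u) w - qform n u * fa_one w) \<otimes>\<^sub>f fa_one
      \<in> cl_ideal n"
    using assms free_elems_one by (intro cl_ideal.ci_gen) (auto simp: free_elems_def Rep_free_alg_ops)
  moreover have "(\<lambda>w. (fa_iota n u \<otimes>\<^sub>f fa_iota n u) w - qform n u * fa_one w)
      = Rep_free_alg (iota n u * iota n u - scal (qform n u))"
    by (rule ext) (simp add: Rep_free_alg_ops Rep_iota Rep_scal fa_one_def)
  ultimately show ?thesis by (simp add: Cl_ideal_def fa_one_mult fa_mult_one)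
qed

lemma Cl_ideal_anticommute:
  assumes u: "u \<in> carrier_vec (2*n)" and v: "v \<in> carrier_vec (2*n)"
  shows "iota n u * iota n v + iota n v * iota n u - scal (qbil n u v) \<in> Cl_ideal n"
proof -
  have "(iota n (u + v) * iota n (u + v) - scal (qform n (u + v)))
      - (iota n u * iota n u - scal (qform n u)) - (iota n v * iota n v - scal (qform n v))
      \<in> Cl_ideal n"
    using u v by (intro Cl_ideal_diff Cl_ideal_square) auto
  moreover have "(iota n (u + v) * iota n (u + v) - scal (qform n (u + v)))
      - (iota n u * iota n u - scal (qform n u)) - (iota n v * iota n v - scal (qform n v))
      = iota n u * iota n v + iota n v * iota n u - scal (qbil n u v)"
    by (simp add: iota_add[OF u v] qbil_def scal_diff scal_add algebra_simps)
  ultimately show ?thesis by simp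
qed

definition cl_cong :: "nat \<Rightarrow> 'a::comm_ring_1 free_alg \<Rightarrow> 'a free_alg \<Rightarrow> bool" where
  "cl_cong n x y \<longleftrightarrow> x - y \<in> Cl_ideal n"

lemma cl_eq_iff_cl_cong: "cl_eq n (Rep_free_alg x) (Rep_free_alg y) \<longleftrightarrow> cl_cong n x y"
  by (simp add: cl_eq_def cl_cong_def Cl_ideal_def Rep_free_alg_ops)

lemma cl_cong_refl: "cl_cong n x x"
  by (simp add: cl_cong_def Cl_ideal_zero)

lemma cl_cong_trans [trans]: "cl_cong n x y \<Longrightarrow> cl_cong n y z \<Longrightarrow> cl_cong n x z"
  unfolding cl_cong_def by (metis Cl_ideal_add diff_add_cancel add_diff_eq)

lemma cl_cong_mult:
  "c \<in> free_elems n \<Longrightarrow> d \<in> free_elems n \<Longrightarrow> cl_cong n x y \<Longrightarrow> cl_cong n (c * x * d) (c * y * d)"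
  unfolding cl_cong_def by (metis Cl_ideal_mult_left Cl_ideal_mult_right right_diff_distrib left_diff_distrib)

lemma cl_cong_mult_cancel:
  assumes "a \<in> free_elems n" "b \<in> free_elems n" "cl_cong n m 1" "cl_cong n (a * b) 1"
  shows "cl_cong n (a * m * b) 1"
  using cl_cong_mult[OF assms(1-3)] assms(4) by (simp add: cl_cong_trans)

definition even_elems :: "'a::comm_ring_1 free_alg set" where
  "even_elems = {x. \<forall>w. Rep_free_alg x w \<noteq> 0 \<longrightarrow> even (length w)}"

lemma even_elems_mult: "x \<in> even_elems \<Longrightarrow> y \<in> even_elems \<Longrightarrow> x * y \<in> even_elems"
proof -
  assume xy: "x \<in> even_elems" "y \<in> even_elems"
  have "even (length w)" if "Rep_free_alg (x * y) w \<noteq> 0" for w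
  proof -
    from that obtain i where "Rep_free_alg x (take i w) * Rep_free_alg y (drop i w) \<noteq> 0"
      unfolding Rep_free_alg_ops fa_mult_def using sum.not_neutral_contains_not_neutral by blast
    then have "Rep_free_alg x (take i w) \<noteq> 0" "Rep_free_alg y (drop i w) \<noteq> 0" by auto
    then have "even (length (take i w))" "even (length (drop i w))"
      using xy unfolding even_elems_def by blast+
    then show ?thesis by (metis append_take_drop_id length_append even_add)
  qed
  then show ?thesis by (simp add: even_elems_def)
qed

lemma even_elems_add:
  assumes "x \<in> even_elems" "y \<in> even_elems"
  shows "x + y \<in> even_elems"
  unfolding even_elems_def
proof (intro CollectI allI impI)
  fix w assume "Rep_free_alg (x + y) w \<noteq> 0"
  then have "Rep_free_alg x w \<noteq> 0 \<or> Rep_free_alg y w \<noteq> 0" by (auto simp: Rep_free_alg_ops)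
  then show "even (length w)" using assms by (auto simp: even_elems_def)
qed

lemma even_elems_scal: "scal c \<in> even_elems"
  by (simp add: even_elems_def Rep_scal)

lemma even_elems_one: "1 \<in> even_elems"
  by (metis even_elems_scal scal_one)

lemma even_elems_iota_mult: "iota n u * iota n v \<in> even_elems"
proof -
  have iota_off: "fa_iota n u w = 0" if "length w \<noteq> 1" for u :: "'a vec" and w
    using that by (auto simp: fa_iota_def split: list.splits)
  have vanish: "Rep_free_alg (iota n u * iota n v) w = 0" if "length w \<noteq> 2" for w
    unfolding Rep_free_alg_ops Rep_iota fa_mult_def
  proof (rule sum.neutral, rule ballI)
    fix i
    have "length (take i w) \<noteq> 1 \<or> length (drop i w) \<noteq> 1" using that by auto
    then show "fa_iota n u (take i w) * fa_iota n v (drop i w) = 0" using iota_off by auto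
  qed
  show ?thesis unfolding even_elems_def
  proof (intro CollectI allI impI)
    fix w assume "Rep_free_alg (iota n u * iota n v) w \<noteq> 0"
    then have "length w = 2" using vanish by blast
    then show "even (length w)" by simp
  qed
qed

section \<open>Generated matrix groups and transvections\<close>

inductive_set gen_monoid :: "nat \<Rightarrow> 'a::comm_ring_1 mat set \<Rightarrow> 'a mat set"
  for m :: nat and S :: "'a mat set" where
  gen_monoid_one: "1\<^sub>m m \<in> gen_monoid m S"
| gen_monoid_mult: "A \<in> gen_monoid m S \<Longrightarrow> s \<in> S \<Longrightarrow> A * s \<in> gen_monoid m S"

definition inverse_closed :: "nat \<Rightarrow> 'a::comm_ring_1 mat set \<Rightarrow> bool" where
  "inverse_closed m S \<longleftrightarrow> S \<subseteq> carrier_mat m m \<and> (\<forall>s\<in>S. \<exists>s'\<in>S. s * s' = 1\<^sub>m m \<and> s' * s = 1\<^sub>m m)"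

context
  fixes m :: nat and S :: "'a::comm_ring_1 mat set"
  assumes S: "inverse_closed m S"
begin

lemma gen_monoid_carrier: "A \<in> gen_monoid m S \<Longrightarrow> A \<in> carrier_mat m m"
  by (induction A rule: gen_monoid.induct) (use S in \<open>auto simp: inverse_closed_def\<close>)

lemma gen_monoid_mult_closed:
  assumes A: "A \<in> gen_monoid m S" shows "B \<in> gen_monoid m S \<Longrightarrow> A * B \<in> gen_monoid m S"
proof (induction B rule: gen_monoid.induct)
  case gen_monoid_one
  then show ?case using gen_monoid_carrier[OF A] A by simp
next
  case (gen_monoid_mult B s)
  have "s \<in> carrier_mat m m" using gen_monoid_mult.hyps(2) S by (auto simp: inverse_closed_def)
  then have "A * (B * s) = (A * B) * s"
    using gen_monoid_carrier[OF A] gen_monoid_carrier[OF gen_monoid_mult.hyps(1)] by simp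
  then show ?case using gen_monoid.gen_monoid_mult[OF gen_monoid_mult.IH gen_monoid_mult.hyps(2)] by simp
qed

lemma gen_monoid_inverse:
  "A \<in> gen_monoid m S \<Longrightarrow> \<exists>A'\<in>gen_monoid m S. A * A' = 1\<^sub>m m \<and> A' * A = 1\<^sub>m m"
proof (induction A rule: gen_monoid.induct)
  case gen_monoid_one
  then show ?case by (intro bexI[of _ "1\<^sub>m m"]) (auto intro: gen_monoid.gen_monoid_one)
next
  case (gen_monoid_mult A s)
  from gen_monoid_mult.IH obtain A' where A': "A' \<in> gen_monoid m S" "A * A' = 1\<^sub>m m" "A' * A = 1\<^sub>m m"
    by blast
  from S gen_monoid_mult.hyps(2) obtain s' where s': "s' \<in> S" "s * s' = 1\<^sub>m m" "s' * s = 1\<^sub>m m"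
    unfolding inverse_closed_def by blast
  have car: "A \<in> carrier_mat m m" "A' \<in> carrier_mat m m" "s \<in> carrier_mat m m" "s' \<in> carrier_mat m m"
    using gen_monoid_carrier gen_monoid_mult.hyps A'(1) s'(1) S by (auto simp: inverse_closed_def)
  have "s' \<in> gen_monoid m S"
    using gen_monoid.gen_monoid_mult[OF gen_monoid.gen_monoid_one[of m S] s'(1)] car by simp
  then have "s' * A' \<in> gen_monoid m S" using A'(1) by (rule gen_monoid_mult_closed)
  moreover have "A * s * (s' * A') = A * (s * s') * A'" "s' * A' * (A * s) = s' * (A' * A) * s"
    using car by (simp_all add: assoc_mult_mat[of _ m m _ m _ m])
  ultimately show ?case using A' s' car by auto
qed

lemma gen_group_eq_gen_monoid: "gen_group m S = gen_monoid m S"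
proof
  show "gen_group m S \<subseteq> gen_monoid m S"
  proof
    fix A assume "A \<in> gen_group m S"
    then show "A \<in> gen_monoid m S"
    proof (induction A rule: gen_group.induct)
      case (gg_inv A B)
      from gen_monoid_inverse[OF gg_inv.IH] obtain A' where
        A': "A' \<in> gen_monoid m S" "A' * A = 1\<^sub>m m" by blast
      have "A \<in> carrier_mat m m" "A' \<in> carrier_mat m m"
        using gen_monoid_carrier gg_inv.IH A'(1) by auto
      then have "B = A' * (A * B)" using gg_inv.hyps(2) A'(2) by (simp flip: assoc_mult_mat)
      then show ?case using gg_inv.hyps(3) A' \<open>A' \<in> carrier_mat m m\<close> by simp
    qed (auto intro: gen_monoid.intros)
  qed
  show "gen_monoid m S \<subseteq> gen_group m S"
    by (rule subsetI, erule gen_monoid.induct) (auto intro: gen_group.intros)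
qed

lemma gen_group_carrier: "A \<in> gen_group m S \<Longrightarrow> A \<in> carrier_mat m m"
  and gen_group_mult: "A \<in> gen_group m S \<Longrightarrow> B \<in> gen_group m S \<Longrightarrow> A * B \<in> gen_group m S"
  and gen_group_inverse:
    "A \<in> gen_group m S \<Longrightarrow> \<exists>A'\<in>gen_group m S. A * A' = 1\<^sub>m m \<and> A' * A = 1\<^sub>m m"
  unfolding gen_group_eq_gen_monoid
  by (fact gen_monoid_carrier gen_monoid_mult_closed gen_monoid_inverse)+

lemma gen_group_gen: "s \<in> S \<Longrightarrow> s \<in> gen_group m S"
  using gen_group.gg_mult[OF gen_group.gg_one[of m S], of s] S by (auto simp: inverse_closed_def)

end

lemma gen_group_induct [consumes 2, case_names one mult]:
  assumes "inverse_closed m S" "M \<in> gen_group m S"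
    and "P (1\<^sub>m m)" and "\<And>A s. A \<in> gen_group m S \<Longrightarrow> P A \<Longrightarrow> s \<in> S \<Longrightarrow> P (A * s)"
  shows "P M"
proof -
  have "M \<in> gen_monoid m S" using assms(2) unfolding gen_group_eq_gen_monoid[OF assms(1)] .
  then show ?thesis
    by (induction M rule: gen_monoid.induct)
      (use assms(3,4) gen_group_eq_gen_monoid[OF assms(1)] in auto)
qed

lemma mat_eqI_mult_vec:
  fixes A B :: "'a::comm_ring_1 mat"
  assumes A: "A \<in> carrier_mat m m" and B: "B \<in> carrier_mat m m"
    and AB: "\<And>u. u \<in> carrier_vec m \<Longrightarrow> A *\<^sub>v u = B *\<^sub>v u"
  shows "A = B"
proof (rule eq_matI)
  fix k l assume kl: "k < dim_row B" "l < dim_col B"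
  have "(A *\<^sub>v unit_vec m l) $ k = (B *\<^sub>v unit_vec m l) $ k" using AB by simp
  then show "A $$ (k, l) = B $$ (k, l)" using A B kl by simp
qed (use A B in auto)

lemma assoc_mult_mat_vec_square:
  "A \<in> carrier_mat n n \<Longrightarrow> B \<in> carrier_mat n n \<Longrightarrow> u \<in> carrier_vec n \<Longrightarrow> (A * B) *\<^sub>v u = A *\<^sub>v (B *\<^sub>v u)"
  for A :: "'a::comm_ring_1 mat"
  by (simp add: assoc_mult_mat_vec[of _ n n _ n])

lemma mult_mat_vec_smult:
  "A \<in> carrier_mat nr nc \<Longrightarrow> v \<in> carrier_vec nc \<Longrightarrow> A *\<^sub>v (k \<cdot>\<^sub>v v) = k \<cdot>\<^sub>v (A *\<^sub>v v)"
  for A :: "'a::comm_ring_1 mat"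
  by (intro eq_vecI) auto

definition transvection :: "nat \<Rightarrow> 'a::comm_ring_1 vec \<Rightarrow> 'a vec \<Rightarrow> 'a mat" where
  "transvection n x y = 1\<^sub>m n + mat n n (\<lambda>(r, s). x $ r * y $ s)"

lemma transvection_carrier [simp]: "transvection n x y \<in> carrier_mat n n"
  and transvection_dim [simp]: "dim_row (transvection n x y) = n" "dim_col (transvection n x y) = n"
  unfolding transvection_def by auto

lemma transvection_mult_vec:
  assumes "x \<in> carrier_vec n" "y \<in> carrier_vec n" "u \<in> carrier_vec n"
  shows "transvection n x y *\<^sub>v u = u + (y \<bullet> u) \<cdot>\<^sub>v x"
proof (rule eq_vecI)
  fix k assume "k < dim_vec (u + (y \<bullet> u) \<cdot>\<^sub>v x)"
  then have k: "k < n" using assms by simp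
  have "(transvection n x y *\<^sub>v u) $ k = (\<Sum>l = 0..<n. transvection n x y $$ (k, l) * u $ l)"
    using assms k by (simp add: scalar_prod_def)
  also have "\<dots> = (\<Sum>l = 0..<n. (if l = k then u $ l else 0) + x $ k * (y $ l * u $ l))"
    by (rule sum.cong) (auto simp: transvection_def k algebra_simps)
  also have "\<dots> = u $ k + x $ k * (y \<bullet> u)"
    using assms k by (simp add: sum.distrib sum_distrib_left scalar_prod_def)
  finally show "(transvection n x y *\<^sub>v u) $ k = (u + (y \<bullet> u) \<cdot>\<^sub>v x) $ k"
    using assms k by (simp add: mult.commute)
qed (use assms in simp)

lemma transpose_transvection: "transpose_mat (transvection n x y) = transvection n y x"
  by (rule eq_matI) (auto simp: transvection_def mult.commute)

lemma transvection_zero: "transvection n (0\<^sub>v n) y = 1\<^sub>m n"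
  by (rule eq_matI) (auto simp: transvection_def)

lemma transvection_smult:
  "x \<in> carrier_vec n \<Longrightarrow> y \<in> carrier_vec n \<Longrightarrow> transvection n (c \<cdot>\<^sub>v x) y = transvection n x (c \<cdot>\<^sub>v y)"
  by (rule eq_matI) (auto simp: transvection_def)

lemma transvection_mult_transvection:
  assumes x: "x \<in> carrier_vec n" and x': "x' \<in> carrier_vec n" and y: "y \<in> carrier_vec n"
    and yx': "y \<bullet> x' = 0"
  shows "transvection n x y * transvection n x' y = transvection n (x + x') y"
proof (rule mat_eqI_mult_vec)
  fix u :: "'a vec" assume u: "u \<in> carrier_vec n"
  have "y \<bullet> (u + (y \<bullet> u) \<cdot>\<^sub>v x') = y \<bullet> u"
    using u x' y yx' by (simp add: scalar_prod_add_distrib[of _ n])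
  then have "(transvection n x y * transvection n x' y) *\<^sub>v u
      = u + (y \<bullet> u) \<cdot>\<^sub>v x' + (y \<bullet> u) \<cdot>\<^sub>v x"
    using u x x' y by (simp add: assoc_mult_mat_vec_square[OF _ _ u] transvection_mult_vec)
  also have "\<dots> = transvection n (x + x') y *\<^sub>v u"
    using u x x' y by (simp add: transvection_mult_vec) (rule eq_vecI; simp add: algebra_simps)
  finally show "(transvection n x y * transvection n x' y) *\<^sub>v u = transvection n (x + x') y *\<^sub>v u" .
qed auto

lemma conjugate_transvection:
  assumes A: "A \<in> carrier_mat n n" and A': "A' \<in> carrier_mat n n" and AA': "A * A' = 1\<^sub>m n"
    and x: "x \<in> carrier_vec n" and y: "y \<in> carrier_vec n"
  shows "A * transvection n x y * A' = transvection n (A *\<^sub>v x) (transpose_mat A' *\<^sub>v y)"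
proof (rule mat_eqI_mult_vec)
  fix u :: "'a vec" assume u: "u \<in> carrier_vec n"
  have "(A * transvection n x y * A') *\<^sub>v u = A *\<^sub>v (A' *\<^sub>v u + (y \<bullet> (A' *\<^sub>v u)) \<cdot>\<^sub>v x)"
    using A A' u x y
    by (simp add: assoc_mult_mat_vec_square[OF mult_carrier_mat[OF A transvection_carrier] A']
        assoc_mult_mat_vec_square[OF A transvection_carrier] transvection_mult_vec)
  also have "\<dots> = u + ((transpose_mat A' *\<^sub>v y) \<bullet> u) \<cdot>\<^sub>v (A *\<^sub>v x)"
    using A A' u x y
    using A A' u x y
    by (simp add: mult_add_distrib_mat_vec[OF A] mult_mat_vec_smult[OF A] transpose_vec_mult_scalar[OF A']
        AA' flip: assoc_mult_mat_vec_square[OF A A' u])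
  finally show "(A * transvection n x y * A') *\<^sub>v u
      = transvection n (A *\<^sub>v x) (transpose_mat A' *\<^sub>v y) *\<^sub>v u"
    using A A' u x y by (simp add: transvection_mult_vec)
qed (use A A' in auto)

lemma elem_gens_eq: "elem_gens n = {transvection n (c \<cdot>\<^sub>v unit_vec n i) (unit_vec n j) | i j c. i < n \<and> j < n \<and> i \<noteq> j}"
proof -
  have eq: "1\<^sub>m n + c \<cdot>\<^sub>m emat n i j = transvection n (c \<cdot>\<^sub>v unit_vec n i) (unit_vec n j)" for i j c
    by (rule eq_matI) (auto simp: transvection_def emat_def unit_vec_def)
  show ?thesis unfolding elem_gens_def eq ..
qed

lemma inverse_closed_elem_gens: "inverse_closed n (elem_gens n :: 'a::comm_ring_1 mat set)"
  unfolding inverse_closed_def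
proof (intro conjI ballI)
  fix s :: "'a mat" assume "s \<in> elem_gens n"
  then obtain i j c where s: "s = transvection n (c \<cdot>\<^sub>v unit_vec n i) (unit_vec n j)"
    and ij: "i < n" "j < n" "i \<noteq> j"
    unfolding elem_gens_eq by blast
  have inv: "transvection n (d \<cdot>\<^sub>v unit_vec n i) (unit_vec n j) * transvection n (- d \<cdot>\<^sub>v unit_vec n i) (unit_vec n j)
      = 1\<^sub>m n" for d :: 'a
  proof -
    have "d \<cdot>\<^sub>v unit_vec n i + - d \<cdot>\<^sub>v unit_vec n i = 0\<^sub>v n" by (rule eq_vecI) auto
    then show ?thesis using ij by (simp add: transvection_mult_transvection transvection_zero)
  qed
  show "\<exists>s'\<in>elem_gens n. s * s' = 1\<^sub>m n \<and> s' * s = 1\<^sub>m n"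
    using inv[of c] inv[of "- c"] ij unfolding s elem_gens_eq
    by (intro bexI[of _ "transvection n (- c \<cdot>\<^sub>v unit_vec n i) (unit_vec n j)"]) auto
qed (auto simp: elem_gens_eq)

lemma En_carrier: "A \<in> En n \<Longrightarrow> A \<in> carrier_mat n n"
  and En_mult: "A \<in> En n \<Longrightarrow> B \<in> En n \<Longrightarrow> A * B \<in> En n"
  and En_inverse: "A \<in> En n \<Longrightarrow> \<exists>A'\<in>En n. A * A' = 1\<^sub>m n \<and> A' * A = 1\<^sub>m n"
  and En_one: "1\<^sub>m n \<in> En n"
  unfolding En_def
  by (fact gen_group_carrier[OF inverse_closed_elem_gens] gen_group_mult[OF inverse_closed_elem_gens]
      gen_group_inverse[OF inverse_closed_elem_gens] gen_group.gg_one)+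

lemma elem_transvection_in_En:
  "i < n \<Longrightarrow> j < n \<Longrightarrow> i \<noteq> j \<Longrightarrow> transvection n (c \<cdot>\<^sub>v unit_vec n i) (unit_vec n j) \<in> En n"
  unfolding En_def by (rule gen_group_gen[OF inverse_closed_elem_gens]) (auto simp: elem_gens_eq)

lemma En_induct [consumes 1, case_names one mult]:
  assumes "M \<in> En n"
    and "P (1\<^sub>m n)"
    and "\<And>A i j c. A \<in> En n \<Longrightarrow> P A \<Longrightarrow> i < n \<Longrightarrow> j < n \<Longrightarrow> i \<noteq> j
      \<Longrightarrow> P (A * transvection n (c \<cdot>\<^sub>v unit_vec n i) (unit_vec n j))"
  shows "P M"
  using inverse_closed_elem_gens assms(1)[unfolded En_def]
  by (induction M rule: gen_group_induct) (use assms(2,3) in \<open>auto simp: En_def elem_gens_eq\<close>)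

lemma En_transpose: "A \<in> En n \<Longrightarrow> transpose_mat A \<in> En n"
proof (induction A rule: En_induct)
  case (mult A i j c)
  have "transpose_mat (transvection n (c \<cdot>\<^sub>v unit_vec n i) (unit_vec n j))
      = transvection n (c \<cdot>\<^sub>v unit_vec n j) (unit_vec n i)"
    by (simp add: transpose_transvection transvection_smult)
  then show ?case
    using mult En_carrier[OF mult.hyps(1)]
    by (simp add: transpose_mult[of _ n n _ n] En_mult elem_transvection_in_En)
qed (simp add: En_one)

lemma transvection_col_in_En:
  assumes k: "k < n" and z: "z \<in> carrier_vec n" "z $ k = 0"
  shows "transvection n z (unit_vec n k) \<in> En n"
proof -
  let ?z = "\<lambda>L. vec n (\<lambda>t. if t \<in> L then z $ t else 0)"
  have "transvection n (?z L) (unit_vec n k) \<in> En n" if "finite L" "L \<subseteq> {..<n} - {k}" for L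
    using that
  proof (induction L rule: finite_induct)
    case empty
    have "?z {} = 0\<^sub>v n" by auto
    then show ?case by (simp add: transvection_zero En_one)
  next
    case (insert l L)
    have l: "l < n" "l \<noteq> k" using insert.prems by auto
    have "?z (insert l L) = ?z L + (z $ l) \<cdot>\<^sub>v unit_vec n l"
      using insert.hyps(2) l by (intro eq_vecI) auto
    also have "transvection n \<dots> (unit_vec n k)
        = transvection n (?z L) (unit_vec n k) * transvection n ((z $ l) \<cdot>\<^sub>v unit_vec n l) (unit_vec n k)"
      using k l by (intro transvection_mult_transvection[symmetric]) auto
    finally show ?case using insert.IH insert.prems l k by (simp add: En_mult elem_transvection_in_En)
  qed
  moreover have "?z ({..<n} - {k}) = z" using z by (intro eq_vecI) auto
  ultimately show ?thesis by (metis finite_Diff finite_lessThan order_refl)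
qed

lemma transvection_row_in_En:
  assumes "k < n" "z \<in> carrier_vec n" "z $ k = 0"
  shows "transvection n (unit_vec n k) z \<in> En n"
  using En_transpose[OF transvection_col_in_En[OF assms]] by (simp add: transpose_transvection)

text \<open>The transvection is the commutator of the column and row transvections through \<open>k\<close>.\<close>

lemma transvection_in_En_avoiding:
  assumes k: "k < n" and x: "x \<in> carrier_vec n" and y: "y \<in> carrier_vec n"
    and xk: "x $ k = 0" and yk: "y $ k = 0" and yx: "y \<bullet> x = 0"
  shows "transvection n x y \<in> En n"
proof -
  let ?e = "unit_vec n k :: 'a vec"
  define \<alpha> where "\<alpha> = transvection n x ?e"
  define \<alpha>' where "\<alpha>' = transvection n (- x) ?e"
  define \<beta> where "\<beta> = transvection n ?e y"
  have "\<alpha> * \<alpha>' = transvection n (x + - x) ?e"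
    unfolding \<alpha>_def \<alpha>'_def using k x xk by (intro transvection_mult_transvection) auto
  also have "x + - x = 0\<^sub>v n" using x by auto
  finally have \<alpha>\<alpha>': "\<alpha> * \<alpha>' = 1\<^sub>m n" by (simp add: transvection_zero)
  have \<alpha>e: "\<alpha> *\<^sub>v ?e = ?e + x" unfolding \<alpha>_def using k x by (simp add: transvection_mult_vec)
  have "(- x) \<bullet> y = 0" using x y yx by (simp add: comm_scalar_prod[of y n x])
  then have \<alpha>'y: "transpose_mat \<alpha>' *\<^sub>v y = y"
    unfolding \<alpha>'_def transpose_transvection using k x y
    by (simp add: transvection_mult_vec) (rule eq_vecI; simp)
  have "\<alpha> * \<beta> * \<alpha>' = transvection n (\<alpha> *\<^sub>v ?e) (transpose_mat \<alpha>' *\<^sub>v y)"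
    unfolding \<beta>_def using \<alpha>\<alpha>' k y by (intro conjugate_transvection) (auto simp: \<alpha>_def \<alpha>'_def)
  also have "\<dots> = transvection n (?e + x) y" unfolding \<alpha>e \<alpha>'y ..
  also have "\<dots> * transvection n (- ?e) y = transvection n (?e + x + - ?e) y"
    using k x y yk by (intro transvection_mult_transvection) auto
  also have "?e + x + - ?e = x" using x by (intro eq_vecI) auto
  finally have "transvection n x y = \<alpha> * \<beta> * \<alpha>' * transvection n (- ?e) y" ..
  moreover have "transvection n (- ?e) y = transvection n ?e (- y)"
    by (rule eq_matI) (use y in \<open>auto simp: transvection_def\<close>)
  moreover have "\<alpha> \<in> En n" "\<alpha>' \<in> En n" "\<beta> \<in> En n" "transvection n ?e (- y) \<in> En n"
    unfolding \<alpha>_def \<alpha>'_def \<beta>_def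
    using k x y xk yk by (simp_all add: transvection_col_in_En transvection_row_in_En)
  ultimately show ?thesis by (simp add: En_mult)
qed

lemma exists_third_index:
  assumes "3 \<le> n" shows "\<exists>k<n. k \<noteq> i \<and> k \<noteq> (j::nat)"
proof -
  define k :: nat where "k = (if 0 \<notin> {i, j} then 0 else if 1 \<notin> {i, j} then 1 else 2)"
  have "k \<noteq> i \<and> k \<noteq> j" "k < n" using assms unfolding k_def by auto
  then show ?thesis by blast
qed

text \<open>This is the only place where \<open>n \<ge> 3\<close> is needed: a third index \<open>k\<close> splits the
  transvection into one avoiding \<open>k\<close> and a row transvection through \<open>k\<close>.\<close>

lemma transvection_skew_in_En:
  assumes n: "3 \<le> n" and w: "w \<in> carrier_vec n" and ij: "i < n" "j < n" "i \<noteq> j"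
  shows "transvection n (c \<cdot>\<^sub>v w) ((w $ j) \<cdot>\<^sub>v unit_vec n i - (w $ i) \<cdot>\<^sub>v unit_vec n j) \<in> En n"
proof -
  obtain k where k: "k < n" "k \<noteq> i" "k \<noteq> j" using exists_third_index[OF n] by blast
  define x where "x = c \<cdot>\<^sub>v w"
  define y where "y = (w $ j) \<cdot>\<^sub>v unit_vec n i - (w $ i) \<cdot>\<^sub>v unit_vec n j"
  define x' where "x' = x - (x $ k) \<cdot>\<^sub>v unit_vec n k"
  have xy: "x \<in> carrier_vec n" "y \<in> carrier_vec n" "y $ k = 0"
    unfolding x_def y_def using w k ij by auto
  have "y \<bullet> x = c * (w $ j * w $ i - w $ i * w $ j)"
    unfolding x_def y_def using w ij by (simp add: minus_scalar_prod_distrib[of _ n] algebra_simps)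
  then have yx: "y \<bullet> x = 0" by simp
  have x': "x' \<in> carrier_vec n" "x' $ k = 0" "y \<bullet> x' = 0"
    unfolding x'_def using xy yx k by (auto simp: scalar_prod_minus_distrib[of _ n])
  have "x = x' + (x $ k) \<cdot>\<^sub>v unit_vec n k" unfolding x'_def using xy by (intro eq_vecI) auto
  moreover have "transvection n x' y * transvection n ((x $ k) \<cdot>\<^sub>v unit_vec n k) y
      = transvection n (x' + (x $ k) \<cdot>\<^sub>v unit_vec n k) y"
    using x' xy k by (intro transvection_mult_transvection) auto
  ultimately have "transvection n x y = transvection n x' y * transvection n ((x $ k) \<cdot>\<^sub>v unit_vec n k) y"
    by simp
  also have "\<dots> = transvection n x' y * transvection n (unit_vec n k) ((x $ k) \<cdot>\<^sub>v y)"
    using xy by (simp add: transvection_smult)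
  finally have "transvection n x y \<in> En n"
    using x' xy k by (simp add: En_mult transvection_in_En_avoiding transvection_row_in_En)
  then show ?thesis unfolding x_def y_def .
qed

section \<open>The elementary orthogonal group\<close>

definition eo_mat :: "nat \<Rightarrow> nat \<Rightarrow> nat \<Rightarrow> 'a::comm_ring_1 \<Rightarrow> 'a mat" where
  "eo_mat n i j c = 1\<^sub>m (2*n) + c \<cdot>\<^sub>m (emat (2*n) i j - emat (2*n) (hpart n j) (hpart n i))"

lemma eo_gens_eq: "eo_gens n = {eo_mat n i j c | i j c. i < 2*n \<and> j < 2*n \<and> i \<noteq> j}"
  unfolding eo_gens_def eo_mat_def ..

lemma eo_mat_carrier [simp]: "eo_mat n i j c \<in> carrier_mat (2*n) (2*n)"
  and eo_mat_dim [simp]: "dim_row (eo_mat n i j c) = 2*n" "dim_col (eo_mat n i j c) = 2*n"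
  by (auto simp: eo_mat_def emat_def)

lemma eo_mat_index:
  "k < 2*n \<Longrightarrow> l < 2*n \<Longrightarrow> eo_mat n i j c $$ (k, l) = (if k = l then 1 else 0)
    + c * ((if k = i \<and> l = j then 1 else 0) - (if k = hpart n j \<and> l = hpart n i then 1 else 0))"
  by (simp add: eo_mat_def emat_def)

lemma eo_mat_mult_vec_index:
  assumes u: "u \<in> carrier_vec (2*n)" and k: "k < 2*n" and ij: "i < 2*n" "j < 2*n"
  shows "(eo_mat n i j c *\<^sub>v u) $ k
    = u $ k + c * ((if k = i then u $ j else 0) - (if k = hpart n j then u $ hpart n i else 0))"
proof -
  have "(eo_mat n i j c *\<^sub>v u) $ k = (\<Sum>l = 0..<2*n. eo_mat n i j c $$ (k, l) * u $ l)"
    using u k by (simp add: scalar_prod_def)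
  also have "\<dots> = (\<Sum>l = 0..<2*n. (if l = k then u $ l else 0)
      + c * ((if l = j then (if k = i then u $ l else 0) else 0)
        - (if l = hpart n i then (if k = hpart n j then u $ l else 0) else 0)))"
  proof (rule sum.cong)
    fix l assume "l \<in> {0..<2*n}"
    then have l: "l < 2*n" by simp
    show "eo_mat n i j c $$ (k, l) * u $ l = (if l = k then u $ l else 0)
      + c * ((if l = j then (if k = i then u $ l else 0) else 0)
        - (if l = hpart n i then (if k = hpart n j then u $ l else 0) else 0))"
      unfolding eo_mat_index[OF k l] by (simp add: algebra_simps)
  qed simp
  also have "\<dots> = u $ k + c * ((if k = i then u $ j else 0) - (if k = hpart n j then u $ hpart n i else 0))"
    using ij hpart_less[of i n]
    by (simp add: sum.distrib sum_subtractf sum_distrib_left[symmetric] sum.delta' k)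
  finally show ?thesis .
qed

lemma eo_mat_mult_vec:
  assumes u: "u \<in> carrier_vec (2*n)" and ij: "i < 2*n" "j < 2*n"
  shows "eo_mat n i j c *\<^sub>v u
    = u + (c * u $ j) \<cdot>\<^sub>v unit_vec (2*n) i - (c * u $ hpart n i) \<cdot>\<^sub>v unit_vec (2*n) (hpart n j)"
proof (rule eq_vecI)
  fix k assume "k < dim_vec (u + (c * u $ j) \<cdot>\<^sub>v unit_vec (2*n) i
    - (c * u $ hpart n i) \<cdot>\<^sub>v unit_vec (2*n) (hpart n j))"
  then have k: "k < 2*n" using u by simp
  show "(eo_mat n i j c *\<^sub>v u) $ k = (u + (c * u $ j) \<cdot>\<^sub>v unit_vec (2*n) i
    - (c * u $ hpart n i) \<cdot>\<^sub>v unit_vec (2*n) (hpart n j)) $ k"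
    unfolding eo_mat_mult_vec_index[OF u k ij] using u k ij hpart_less[of j n] by (auto simp: algebra_simps)
qed (use u in simp)

lemma eo_mat_inverse:
  assumes ij: "i < 2*n" "j < 2*n" "i \<noteq> j"
  shows "eo_mat n i j c * eo_mat n i j (- c) = 1\<^sub>m (2*n)"
proof (rule mat_eqI_mult_vec)
  fix u :: "'a vec" assume u: "u \<in> carrier_vec (2*n)"
  define v where "v = eo_mat n i j (- c) *\<^sub>v u"
  have v: "v \<in> carrier_vec (2*n)" unfolding v_def by (rule mult_mat_vec_carrier[OF eo_mat_carrier u])
  have "j \<noteq> hpart n j" "hpart n i \<noteq> i" "hpart n i \<noteq> hpart n j"
    using hpart_neq[OF ij(2)] hpart_neq[OF ij(1)] hpart_eq_iff[OF ij(1,2)] ij(3) by auto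
  moreover have "hpart n i < 2*n" using ij hpart_less by auto
  ultimately have "v $ j = u $ j" "v $ hpart n i = u $ hpart n i"
    unfolding v_def eo_mat_mult_vec_index[OF u ij(2) ij(1,2)]
      eo_mat_mult_vec_index[OF u \<open>hpart n i < 2*n\<close> ij(1,2)] using ij(3) by auto
  then have "eo_mat n i j c *\<^sub>v v = u"
    unfolding eo_mat_mult_vec[OF v ij(1,2)] unfolding v_def eo_mat_mult_vec[OF u ij(1,2)]
    using u by (intro eq_vecI) auto
  then show "(eo_mat n i j c * eo_mat n i j (- c)) *\<^sub>v u = 1\<^sub>m (2*n) *\<^sub>v u"
    unfolding v_def using u by (simp add: assoc_mult_mat_vec_square[OF eo_mat_carrier eo_mat_carrier u])
qed auto

lemma inverse_closed_eo_gens: "inverse_closed (2*n) (eo_gens n :: 'a::comm_ring_1 mat set)"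
  unfolding inverse_closed_def
proof (intro conjI ballI)
  fix s :: "'a mat" assume "s \<in> eo_gens n"
  then obtain i j c where s: "s = eo_mat n i j c" and ij: "i < 2*n" "j < 2*n" "i \<noteq> j"
    unfolding eo_gens_eq by blast
  show "\<exists>s'\<in>eo_gens n. s * s' = 1\<^sub>m (2*n) \<and> s' * s = 1\<^sub>m (2*n)"
    using eo_mat_inverse[OF ij, of c] eo_mat_inverse[OF ij, of "- c"] ij unfolding s eo_gens_eq
    by (intro bexI[of _ "eo_mat n i j (- c)"]) auto
qed (auto simp: eo_gens_eq)

lemma EO_carrier: "A \<in> EO n \<Longrightarrow> A \<in> carrier_mat (2*n) (2*n)"
  and EO_mult: "A \<in> EO n \<Longrightarrow> B \<in> EO n \<Longrightarrow> A * B \<in> EO n"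
  and EO_inverse: "A \<in> EO n \<Longrightarrow> \<exists>A'\<in>EO n. A * A' = 1\<^sub>m (2*n) \<and> A' * A = 1\<^sub>m (2*n)"
  and EO_one: "1\<^sub>m (2*n) \<in> EO n"
  unfolding EO_def
  by (fact gen_group_carrier[OF inverse_closed_eo_gens] gen_group_mult[OF inverse_closed_eo_gens]
      gen_group_inverse[OF inverse_closed_eo_gens] gen_group.gg_one)+

lemma eo_mat_in_EO: "i < 2*n \<Longrightarrow> j < 2*n \<Longrightarrow> i \<noteq> j \<Longrightarrow> eo_mat n i j c \<in> EO n"
  unfolding EO_def by (rule gen_group_gen[OF inverse_closed_eo_gens]) (auto simp: eo_gens_eq)

lemma EO_induct [consumes 1, case_names one mult]:
  assumes "M \<in> EO n"
    and "P (1\<^sub>m (2*n))"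
    and "\<And>A i j c. A \<in> EO n \<Longrightarrow> P A \<Longrightarrow> i < 2*n \<Longrightarrow> j < 2*n \<Longrightarrow> i \<noteq> j
      \<Longrightarrow> P (A * eo_mat n i j c)"
  shows "P M"
  using inverse_closed_eo_gens assms(1)[unfolded EO_def]
  by (induction M rule: gen_group_induct) (use assms(2,3) in \<open>auto simp: EO_def eo_gens_eq\<close>)

lemma qform_eo_mat:
  assumes u: "u \<in> carrier_vec (2*n)" and ij: "i < 2*n" "j < 2*n" "i \<noteq> j"
  shows "qform n (eo_mat n i j c *\<^sub>v u) = qform n u"
proof -
  let ?e = "unit_vec (2*n) i :: 'a vec" and ?f = "unit_vec (2*n) (hpart n j) :: 'a vec"
  define a where "a = c * u $ j"
  define b where "b = - (c * u $ hpart n i)"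
  define z where "z = a \<cdot>\<^sub>v ?e + b \<cdot>\<^sub>v ?f"
  have hp: "hpart n i < 2*n" "hpart n j < 2*n" using ij hpart_less by auto
  have "eo_mat n i j c *\<^sub>v u = u + z"
    unfolding eo_mat_mult_vec[OF u ij(1,2)] z_def a_def b_def using u by (intro eq_vecI) auto
  moreover have "qform n z = 0"
  proof -
    have "qbil n (a \<cdot>\<^sub>v ?e) (b \<cdot>\<^sub>v ?f) = a * (b * qbil n ?e ?f)"
      using hp by (simp add: qbil_smult_right qbil_commute[of "a \<cdot>\<^sub>v ?e"] qbil_commute[of ?f])
    also have "qbil n ?e ?f = 0"
      using qbil_unit_vec[OF ij(1), of ?f] hp hpart_eq_iff[OF ij(1,2)] ij(3) by simp
    finally show ?thesis
      unfolding z_def qform_add using hp by (simp add: qform_smult qform_unit_vec)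
  qed
  moreover have "qbil n u z = 0"
  proof -
    have "qbil n u z = a * qbil n ?e u + b * qbil n ?f u"
      unfolding z_def using u hp
      by (simp add: qbil_add_right qbil_smult_right qbil_commute[of u])
    then show ?thesis
      using ij hp u by (simp add: qbil_unit_vec hpart_hpart a_def b_def)
  qed
  ultimately show ?thesis by (simp add: qform_add)
qed

lemma qform_EO: "M \<in> EO n \<Longrightarrow> p \<in> carrier_vec (2*n) \<Longrightarrow> qform n (M *\<^sub>v p) = qform n p"
proof (induction M arbitrary: p rule: EO_induct)
  case (mult A i j c)
  have "eo_mat n i j c *\<^sub>v p \<in> carrier_vec (2*n)"
    by (rule mult_mat_vec_carrier[OF eo_mat_carrier mult.prems])
  then show ?case
    using mult.IH[of "eo_mat n i j c *\<^sub>v p"] mult.hyps mult.prems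
    by (simp add: assoc_mult_mat_vec_square[OF EO_carrier[OF mult.hyps(1)] eo_mat_carrier] qform_eo_mat)
qed simp

section \<open>Lifting the elementary orthogonal group to the spin group\<close>

lemma unipotent_mult_unipotent:
  "(1 + scal c * N) * (1 + scal c * N') = 1 + scal c * (N + N') + scal (c * c) * (N * N')"
  by (simp add: algebra_simps scal_commute_left[of N] scal_mult_left)

lemma unipotent_conjugate:
  "(1 + scal c * N) * U * (1 - scal c * N) = U + scal c * (N * U - U * N) - scal (c * c) * (N * U * N)"
  by (simp add: algebra_simps scal_commute_left[of U] scal_commute_left[of N] scal_mult_left)

lemma commutator_eq_anticommutators:
  "a * b * U - U * (a * b) - (scal s * a - scal t * b)
    = a * (b * U + U * b - scal s) - (a * U + U * a - scal t) * b"
  by (simp add: algebra_simps scal_commute[of a])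

lemma conjugate_eq_anticommutators:
  "a * b * U * (a * b) = a * (b * U + U * b - scal s) * (a * b)
    - a * U * (a * b + b * a) * b + a * U * a * (b * b) + scal s * (a * a * b)"
  by (simp add: algebra_simps scal_commute[of a] scal_commute_left[of a])

text \<open>With \<open>a = e\<^sub>i\<close> and \<open>b = e\<^bsub>\<partial> j\<^esub>\<close> the relations \<open>a\<^sup>2 = b\<^sup>2 = ab + ba = 0\<close> hold in the
  Clifford algebra, so \<open>1 + c ab\<close> is a unit with inverse \<open>1 - c ab\<close>; conjugation by it acts
  as \<^const>\<open>eo_mat\<close>.\<close>

definition eo_lift :: "nat \<Rightarrow> nat \<Rightarrow> nat \<Rightarrow> 'a::comm_ring_1 \<Rightarrow> 'a free_alg" where
  "eo_lift n i j c = 1 + scal c * (iota n (unit_vec (2*n) i) * iota n (unit_vec (2*n) (hpart n j)))"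

context
  fixes n i j :: nat
  assumes ij: "i < 2*n" "j < 2*n" "i \<noteq> j"
begin

lemma Cl_ideal_eo_lift_relations:
  fixes u :: "'a::comm_ring_1 vec"
  defines "a \<equiv> iota n (unit_vec (2*n) i) :: 'a free_alg"
    and "b \<equiv> iota n (unit_vec (2*n) (hpart n j))"
  assumes u: "u \<in> carrier_vec (2*n)"
  shows "a * a \<in> Cl_ideal n" "b * b \<in> Cl_ideal n" "a * b + b * a \<in> Cl_ideal n"
    and "a * iota n u + iota n u * a - scal (u $ hpart n i) \<in> Cl_ideal n"
    and "b * iota n u + iota n u * b - scal (u $ j) \<in> Cl_ideal n"
proof -
  have hj: "hpart n j < 2*n" "hpart n i < 2*n" using ij hpart_less by auto
  show "a * a \<in> Cl_ideal n" "b * b \<in> Cl_ideal n"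
    unfolding a_def b_def using Cl_ideal_square[OF unit_vec_carrier]
    by (simp_all add: qform_unit_vec scal_zero)
  have "qbil n (unit_vec (2*n) i) (unit_vec (2*n) (hpart n j)) = (0::'a)"
    using qbil_unit_vec[OF ij(1), of "unit_vec (2*n) (hpart n j)"] hj hpart_eq_iff[OF ij(1,2)] ij(3)
    by simp
  then show "a * b + b * a \<in> Cl_ideal n"
    unfolding a_def b_def using Cl_ideal_anticommute[OF unit_vec_carrier unit_vec_carrier]
    by (metis diff_zero scal_zero)
  show "a * iota n u + iota n u * a - scal (u $ hpart n i) \<in> Cl_ideal n"
    unfolding a_def using Cl_ideal_anticommute[OF unit_vec_carrier[of "2*n" i] u] qbil_unit_vec[OF ij(1) u]
    by simp
  show "b * iota n u + iota n u * b - scal (u $ j) \<in> Cl_ideal n"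
    unfolding b_def using Cl_ideal_anticommute[OF unit_vec_carrier[of "2*n" "hpart n j"] u] qbil_unit_vec[OF hj(1) u]
    by (simp add: hpart_hpart ij(2))
qed

lemma eo_lift_free: "eo_lift n i j c \<in> free_elems n"
  unfolding eo_lift_def by (intro free_elems_add free_elems_mult free_elems_one free_elems_scal free_elems_iota)

lemma eo_lift_even: "eo_lift n i j c \<in> even_elems"
  unfolding eo_lift_def by (intro even_elems_add even_elems_one even_elems_mult even_elems_scal even_elems_iota_mult)

lemma eo_lift_star: "cl_cong n (eo_lift n i j c * star (eo_lift n i j c)) 1"
proof -
  let ?a = "iota n (unit_vec (2*n) i) :: 'a::comm_ring_1 free_alg"
  let ?b = "iota n (unit_vec (2*n) (hpart n j)) :: 'a free_alg"
  note R = Cl_ideal_eo_lift_relations[OF zero_carrier_vec]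
  have star_lift: "star (eo_lift n i j c) = 1 + scal c * (?b * ?a)"
    unfolding eo_lift_def by (simp add: star_add star_one star_mult star_scal star_iota scal_commute)
  have "eo_lift n i j c * star (eo_lift n i j c) - 1
      = scal c * (?a * ?b + ?b * ?a) + scal (c * c) * (?a * (?b * ?b) * ?a)"
    unfolding star_lift unfolding eo_lift_def unipotent_mult_unipotent by (simp add: mult.assoc)
  also have "\<dots> \<in> Cl_ideal n"
    by (rule Cl_ideal_add[OF Cl_ideal_mult_left[OF free_elems_scal R(3)]
          Cl_ideal_mult_left[OF free_elems_scal Cl_ideal_sandwich[OF free_elems_iota free_elems_iota R(2)]]])
  finally show ?thesis by (simp add: cl_cong_def)
qed

lemma eo_lift_uminus:
  "eo_lift n i j (- c) = 1 - scal c * (iota n (unit_vec (2*n) i) * iota n (unit_vec (2*n) (hpart n j)))"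
  by (simp add: eo_lift_def scal_minus)

lemma eo_lift_inverse: "cl_cong n (eo_lift n i j c * eo_lift n i j (- c)) 1"
proof -
  let ?a = "iota n (unit_vec (2*n) i) :: 'a::comm_ring_1 free_alg"
  let ?b = "iota n (unit_vec (2*n) (hpart n j)) :: 'a free_alg"
  note R = Cl_ideal_eo_lift_relations[OF zero_carrier_vec]
  have neg: "eo_lift n i j (- c) = 1 + scal c * (- (?a * ?b))" unfolding eo_lift_uminus by simp
  have "eo_lift n i j c * eo_lift n i j (- c) - 1 = - (scal (c * c) * (?a * ?b * (?a * ?b)))"
    unfolding neg eo_lift_def[of n i j c] unipotent_mult_unipotent by simp
  also have "?a * ?b * (?a * ?b) = ?a * (?a * ?b + ?b * ?a) * ?b - ?a * ?a * (?b * ?b)"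
    by (simp add: algebra_simps)
  also have "- (scal (c * c) * \<dots>) \<in> Cl_ideal n"
    by (rule Cl_ideal_uminus[OF Cl_ideal_mult_left[OF free_elems_scal
          Cl_ideal_diff[OF Cl_ideal_sandwich[OF free_elems_iota free_elems_iota R(3)]
            Cl_ideal_mult_right[OF R(1) free_elems_mult[OF free_elems_iota free_elems_iota]]]]])
  finally show ?thesis by (simp add: cl_cong_def)
qed

lemma eo_lift_conjugate:
  assumes u: "u \<in> carrier_vec (2*n)"
  shows "cl_cong n (eo_lift n i j c * iota n u * eo_lift n i j (- c)) (iota n (eo_mat n i j c *\<^sub>v u))"
proof -
  let ?a = "iota n (unit_vec (2*n) i) :: 'a::comm_ring_1 free_alg"
  let ?b = "iota n (unit_vec (2*n) (hpart n j)) :: 'a free_alg"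
  let ?U = "iota n u" and ?s = "scal (u $ j)" and ?t = "scal (u $ hpart n i)"
  note R = Cl_ideal_eo_lift_relations[OF u]
  have hj: "hpart n j < 2*n" using ij hpart_less by auto
  have target: "iota n (eo_mat n i j c *\<^sub>v u) = ?U + scal c * (?s * ?a - ?t * ?b)"
    unfolding eo_mat_mult_vec[OF u ij(1,2)] using u hj
    by (simp add: iota_add iota_diff iota_smult scal_mult_left[symmetric] algebra_simps)
  have "eo_lift n i j c * ?U * eo_lift n i j (- c) - iota n (eo_mat n i j c *\<^sub>v u)
      = scal c * (?a * ?b * ?U - ?U * (?a * ?b) - (?s * ?a - ?t * ?b)) - scal (c * c) * (?a * ?b * ?U * (?a * ?b))"
    unfolding eo_lift_uminus target unfolding eo_lift_def unipotent_conjugate by (simp add: algebra_simps)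
  also have "\<dots> = scal c * (?a * (?b * ?U + ?U * ?b - ?s) - (?a * ?U + ?U * ?a - ?t) * ?b)
      - scal (c * c) * (?a * (?b * ?U + ?U * ?b - ?s) * (?a * ?b) - ?a * ?U * (?a * ?b + ?b * ?a) * ?b
        + ?a * ?U * ?a * (?b * ?b) + ?s * (?a * ?a * ?b))"
    unfolding commutator_eq_anticommutators conjugate_eq_anticommutators[where s = "u $ j"] ..
  also have "scal c * (?a * (?b * ?U + ?U * ?b - ?s) - (?a * ?U + ?U * ?a - ?t) * ?b)
      - scal (c * c) * (?a * (?b * ?U + ?U * ?b - ?s) * (?a * ?b) - ?a * ?U * (?a * ?b + ?b * ?a) * ?b
        + ?a * ?U * ?a * (?b * ?b) + ?s * (?a * ?a * ?b)) \<in> Cl_ideal n"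
  proof -
    have F: "?a \<in> free_elems n" "?b \<in> free_elems n" "?U \<in> free_elems n" "?s \<in> free_elems n"
      by (rule free_elems_iota free_elems_scal)+
    note free = free_elems_mult free_elems_scal
    show ?thesis
      by (intro Cl_ideal_diff Cl_ideal_add Cl_ideal_mult_left[OF free_elems_scal]
          Cl_ideal_mult_left[OF F(1) R(5)] Cl_ideal_mult_right[OF R(4) F(2)]
          Cl_ideal_sandwich[OF F(1) free_elems_mult[OF F(1,2)] R(5)]
          Cl_ideal_sandwich[OF free_elems_mult[OF F(1,3)] F(2) R(3)]
          Cl_ideal_mult_left[OF free_elems_mult[OF free_elems_mult[OF F(1,3)] F(1)] R(2)]
          Cl_ideal_mult_left[OF F(4) Cl_ideal_mult_right[OF R(1) F(2)]])
  qed
  finally show ?thesis by (simp add: cl_cong_def)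
qed

end

text \<open>A weakening of \<^const>\<open>epin_mat\<close> that drops \<open>M \<in> EO n\<close> and the surjectivity of the
  action, so that closure under products is immediate.\<close>

definition spin_lift :: "nat \<Rightarrow> 'a::comm_ring_1 free_alg \<Rightarrow> 'a free_alg \<Rightarrow> 'a mat \<Rightarrow> bool" where
  "spin_lift n x y M \<longleftrightarrow> x \<in> free_elems n \<and> y \<in> free_elems n \<and> x \<in> even_elems \<and>
    cl_cong n (x * star x) 1 \<and> cl_cong n (x * y) 1 \<and> cl_cong n (y * x) 1 \<and>
    M \<in> carrier_mat (2*n) (2*n) \<and> (\<forall>u\<in>carrier_vec (2*n). cl_cong n (x * iota n u * y) (iota n (M *\<^sub>v u)))"

lemma spin_lift_one: "spin_lift n 1 1 (1\<^sub>m (2*n))"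
  by (simp add: spin_lift_def free_elems_one even_elems_one star_one cl_cong_refl)

lemma spin_lift_eo_mat:
  assumes "i < 2*n" "j < 2*n" "i \<noteq> j"
  shows "spin_lift n (eo_lift n i j c) (eo_lift n i j (- c)) (eo_mat n i j c)"
  using eo_lift_free[OF assms] eo_lift_even[OF assms] eo_lift_star[OF assms]
    eo_lift_inverse[OF assms, of c] eo_lift_inverse[OF assms, of "- c"] eo_lift_conjugate[OF assms]
  unfolding spin_lift_def by auto

lemma spin_lift_mult:
  assumes A: "spin_lift n x1 y1 A" and B: "spin_lift n x2 y2 B"
  shows "spin_lift n (x1 * x2) (y2 * y1) (A * B)"
  unfolding spin_lift_def
proof (intro conjI ballI)
  have x1: "x1 \<in> free_elems n" "y1 \<in> free_elems n" "A \<in> carrier_mat (2*n) (2*n)"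
    and x2: "x2 \<in> free_elems n" "y2 \<in> free_elems n" "B \<in> carrier_mat (2*n) (2*n)"
    using A B by (auto simp: spin_lift_def)
  then show "x1 * x2 \<in> free_elems n" "y2 * y1 \<in> free_elems n" "A * B \<in> carrier_mat (2*n) (2*n)"
    by auto
  show "x1 * x2 \<in> even_elems" using A B by (simp add: spin_lift_def even_elems_mult)
  show "cl_cong n (x1 * x2 * star (x1 * x2)) 1"
    using cl_cong_mult_cancel[of x1 n "star x1" "x2 * star x2"] A B x1
    by (auto simp: spin_lift_def star_mult mult.assoc)
  show "cl_cong n (x1 * x2 * (y2 * y1)) 1"
    using cl_cong_mult_cancel[of x1 n y1 "x2 * y2"] A B x1 by (auto simp: spin_lift_def mult.assoc)
  show "cl_cong n (y2 * y1 * (x1 * x2)) 1"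
    using cl_cong_mult_cancel[of y2 n x2 "y1 * x1"] A B x2 by (auto simp: spin_lift_def mult.assoc)
  fix u :: "'a vec" assume u: "u \<in> carrier_vec (2*n)"
  then have Bu: "B *\<^sub>v u \<in> carrier_vec (2*n)" using x2(3) by simp
  have "cl_cong n (x1 * x2 * iota n u * (y2 * y1)) (x1 * (x2 * iota n u * y2) * y1)"
    by (simp add: mult.assoc cl_cong_refl)
  also have "cl_cong n (x1 * (x2 * iota n u * y2) * y1) (x1 * iota n (B *\<^sub>v u) * y1)"
    using cl_cong_mult[OF x1(1,2)] B u by (simp add: spin_lift_def)
  also have "cl_cong n (x1 * iota n (B *\<^sub>v u) * y1) (iota n (A *\<^sub>v (B *\<^sub>v u)))"
    using A Bu by (simp add: spin_lift_def)
  finally show "cl_cong n (x1 * x2 * iota n u * (y2 * y1)) (iota n ((A * B) *\<^sub>v u))"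
    using x1(3) x2(3) u by (simp add: assoc_mult_mat_vec_square)
qed

lemma EO_has_spin_lift: "M \<in> EO n \<Longrightarrow> \<exists>x y. spin_lift n x y M"
proof (induction M rule: EO_induct)
  case one
  then show ?case using spin_lift_one by blast
next
  case (mult A i j c)
  then show ?case using spin_lift_mult spin_lift_eo_mat by blast
qed

lemma epin_mat_of_spin_lift:
  assumes M: "M \<in> EO n" and L: "spin_lift n x y M"
  shows "epin_mat n (Rep_free_alg x) (Rep_free_alg y) M"
proof -
  have conj_iff: "cl_eq n (Rep_free_alg x \<otimes>\<^sub>f fa_iota n u \<otimes>\<^sub>f Rep_free_alg y) (fa_iota n v)
      \<longleftrightarrow> cl_cong n (x * iota n u * y) (iota n v)" for u v
    by (simp add: cl_eq_iff_cl_cong[symmetric] Rep_free_alg_ops Rep_iota)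
  have Mc: "M \<in> carrier_mat (2*n) (2*n)"
    and conj: "\<And>u. u \<in> carrier_vec (2*n) \<Longrightarrow> cl_cong n (x * iota n u * y) (iota n (M *\<^sub>v u))"
    using L by (auto simp: spin_lift_def)
  obtain M' where M': "M' \<in> EO n" "M * M' = 1\<^sub>m (2*n)" using EO_inverse[OF M] by blast
  have "\<exists>u\<in>carrier_vec (2*n). cl_cong n (x * iota n u * y) (iota n u')" if u': "u' \<in> carrier_vec (2*n)" for u'
  proof
    show "M' *\<^sub>v u' \<in> carrier_vec (2*n)" using EO_carrier[OF M'(1)] u' by simp
    moreover have "M *\<^sub>v (M' *\<^sub>v u') = u'"
      using M' EO_carrier[OF M'(1)] Mc u' by (simp flip: assoc_mult_mat_vec_square)
    ultimately show "cl_cong n (x * iota n (M' *\<^sub>v u') * y) (iota n u')" using conj by metis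
  qed
  moreover have "\<exists>u'\<in>carrier_vec (2*n). cl_cong n (x * iota n u * y) (iota n u')"
    if "u \<in> carrier_vec (2*n)" for u
    using conj[OF that] Mc that by (intro bexI[of _ "M *\<^sub>v u"]) auto
  ultimately show ?thesis
    unfolding epin_mat_def spin_rep_def conj_iff
    using L M Mc conj
    by (auto simp: spin_lift_def free_elems_def even_elems_def cl_eq_iff_cl_cong[symmetric]
        Rep_free_alg_ops Rep_star)
qed

lemma Epin_orbit_eq_EO_orbit: "Epin_orbit n = (EO_orbit n :: 'a::comm_ring_1 vec \<Rightarrow> 'a vec set)"
  unfolding Epin_orbit_def EO_orbit_def epin_mat_def
  using EO_has_spin_lift epin_mat_of_spin_lift by (fastforce simp: epin_mat_def)

section \<open>Orbits on the unit sphere\<close>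

lemma vec_first_append: "v \<in> carrier_vec n \<Longrightarrow> vec_first (v @\<^sub>v w) n = v"
  by (rule eq_vecI) (auto simp: vec_first_def)

lemma vec_first_last_double: "p \<in> carrier_vec (2*n) \<Longrightarrow> vec_first p n @\<^sub>v vec_last p n = p"
  using vec_first_last_append[of p n n] by (simp add: mult_2)

lemma rowmul_one: "v \<in> carrier_vec n \<Longrightarrow> rowmul v (1\<^sub>m n) = v"
  unfolding rowmul_def by simp

lemma rowmul_mult:
  "A \<in> carrier_mat n n \<Longrightarrow> B \<in> carrier_mat n n \<Longrightarrow> v \<in> carrier_vec n \<Longrightarrow> rowmul (rowmul v A) B = rowmul v (A * B)"
  unfolding rowmul_def by (simp add: transpose_mult[of _ n n _ n] assoc_mult_mat_vec_square)

lemma rowmul_transvection: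
  "x \<in> carrier_vec n \<Longrightarrow> y \<in> carrier_vec n \<Longrightarrow> v \<in> carrier_vec n \<Longrightarrow> rowmul v (transvection n x y) = v + (x \<bullet> v) \<cdot>\<^sub>v y"
  unfolding rowmul_def transpose_transvection by (simp add: transvection_mult_vec)

lemma vec_first_eo_mat:
  assumes v: "v \<in> carrier_vec n" and w: "w \<in> carrier_vec n" and ij: "i < 2*n" "j < 2*n"
  shows "vec_first (eo_mat n i j c *\<^sub>v (v @\<^sub>v w)) n = v + vec n (\<lambda>k. c * ((if k = i then (v @\<^sub>v w) $ j else 0)
      - (if k = hpart n j then (v @\<^sub>v w) $ hpart n i else 0)))"
  using eo_mat_mult_vec_index[OF append_carrier_vec_double[OF v w] _ ij] v w
  by (intro eq_vecI) (auto simp: vec_first_def)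

lemma vec_first_eo_mat_low:
  assumes v: "v \<in> carrier_vec n" and w: "w \<in> carrier_vec n" and ij: "i < n" "j < n"
  shows "vec_first (eo_mat n i j c *\<^sub>v (v @\<^sub>v w)) n = rowmul v (transvection n (c \<cdot>\<^sub>v unit_vec n j) (unit_vec n i))"
proof -
  have "rowmul v (transvection n (c \<cdot>\<^sub>v unit_vec n j) (unit_vec n i)) = v + (c * v $ j) \<cdot>\<^sub>v unit_vec n i"
    using v ij by (simp add: rowmul_transvection)
  moreover have ij2: "i < 2*n" "j < 2*n" using ij by auto
  ultimately show ?thesis
    unfolding vec_first_eo_mat[OF v w ij2] using v w ij by (intro eq_vecI) (auto simp: hpart_def)
qed

lemma vec_first_eo_mat_high:
  assumes v: "v \<in> carrier_vec n" and w: "w \<in> carrier_vec n" and ij: "n \<le> i" "n \<le> j" "i < 2*n" "j < 2*n"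
  shows "vec_first (eo_mat n i j c *\<^sub>v (v @\<^sub>v w)) n
    = rowmul v (transvection n ((- c) \<cdot>\<^sub>v unit_vec n (i - n)) (unit_vec n (j - n)))"
proof -
  have "rowmul v (transvection n ((- c) \<cdot>\<^sub>v unit_vec n (i - n)) (unit_vec n (j - n)))
      = v + (- c * v $ (i - n)) \<cdot>\<^sub>v unit_vec n (j - n)"
    using v ij by (simp add: rowmul_transvection)
  then show ?thesis
    unfolding vec_first_eo_mat[OF v w ij(3,4)] using v w ij by (intro eq_vecI) (auto simp: hpart_def)
qed

lemma vec_first_eo_mat_fixed:
  assumes v: "v \<in> carrier_vec n" and w: "w \<in> carrier_vec n" and ij: "i < 2*n" "j < 2*n"
    and "n \<le> i \<and> j < n \<or> j = i + n"
  shows "vec_first (eo_mat n i j c *\<^sub>v (v @\<^sub>v w)) n = v"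
  unfolding vec_first_eo_mat[OF v w ij] using assms by (intro eq_vecI) (auto simp: hpart_def)

lemma vec_first_eo_mat_mixed:
  assumes v: "v \<in> carrier_vec n" and w: "w \<in> carrier_vec n" and vw: "v \<bullet> w = 1"
    and ij: "i < n" "n \<le> j" "j < 2*n" "j \<noteq> i + n"
  shows "vec_first (eo_mat n i j c *\<^sub>v (v @\<^sub>v w)) n
    = rowmul v (transvection n (c \<cdot>\<^sub>v w) ((w $ (j - n)) \<cdot>\<^sub>v unit_vec n i - (w $ i) \<cdot>\<^sub>v unit_vec n (j - n)))"
proof -
  have "i < 2*n" using ij by simp
  moreover have "rowmul v (transvection n (c \<cdot>\<^sub>v w) ((w $ (j - n)) \<cdot>\<^sub>v unit_vec n i - (w $ i) \<cdot>\<^sub>v unit_vec n (j - n)))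
      = v + c \<cdot>\<^sub>v ((w $ (j - n)) \<cdot>\<^sub>v unit_vec n i - (w $ i) \<cdot>\<^sub>v unit_vec n (j - n))"
    using v w vw by (simp add: rowmul_transvection comm_scalar_prod[of w n v])
  ultimately show ?thesis
    unfolding vec_first_eo_mat[OF v w \<open>i < 2*n\<close> ij(3)] using v w ij
    by (intro eq_vecI) (auto simp: hpart_def algebra_simps)
qed

lemma vec_first_eo_mat_in_E_orbit:
  assumes n: "3 \<le> n" and v: "v \<in> carrier_vec n" and w: "w \<in> carrier_vec n" and vw: "v \<bullet> w = 1"
    and ij: "i < 2*n" "j < 2*n" "i \<noteq> j"
  shows "\<exists>\<epsilon>\<in>En n. vec_first (eo_mat n i j c *\<^sub>v (v @\<^sub>v w)) n = rowmul v \<epsilon>"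
proof -
  consider (low) "i < n" "j < n" | (high) "n \<le> i" "n \<le> j" | (fixed) "n \<le> i \<and> j < n \<or> j = i + n"
    | (mixed) "i < n" "n \<le> j" "j \<noteq> i + n"
    by linarith
  then show ?thesis
  proof cases
    case low
    then show ?thesis using vec_first_eo_mat_low[OF v w low] ij(3) by (blast intro: elem_transvection_in_En)
  next
    case high
    then show ?thesis using vec_first_eo_mat_high[OF v w high ij(1,2)] ij by (force intro: elem_transvection_in_En)
  next
    case fixed
    then show ?thesis using vec_first_eo_mat_fixed[OF v w ij(1,2)] rowmul_one[OF v] En_one by metis
  next
    case mixed
    then show ?thesis
      using vec_first_eo_mat_mixed[OF v w vw mixed(1,2) ij(2) mixed(3)]
        transvection_skew_in_En[OF n w, of i "j - n" c] ij by force
  qed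
qed

lemma EO_vec_first_in_E_orbit:
  assumes n: "3 \<le> n" and M: "M \<in> EO n"
  shows "v \<in> carrier_vec n \<Longrightarrow> w \<in> carrier_vec n \<Longrightarrow> v \<bullet> w = 1 \<Longrightarrow>
    \<exists>\<epsilon>\<in>En n. vec_first (M *\<^sub>v (v @\<^sub>v w)) n = rowmul v \<epsilon>"
  using M
proof (induction M arbitrary: v w rule: EO_induct)
  case one
  then show ?case
    by (intro bexI[of _ "1\<^sub>m n"] En_one) (simp add: append_carrier_vec_double vec_first_append rowmul_one)
next
  case (mult A i j c)
  define p where "p = eo_mat n i j c *\<^sub>v (v @\<^sub>v w)"
  define v' where "v' = vec_first p n"
  define w' where "w' = vec_last p n"
  have p: "p \<in> carrier_vec (2*n)"
    unfolding p_def using mult.prems(1,2) by (intro mult_mat_vec_carrier[OF eo_mat_carrier] append_carrier_vec_double)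
  then have p_split: "p = v' @\<^sub>v w'" unfolding v'_def w'_def by (simp add: vec_first_last_double)
  have v'w': "v' \<in> carrier_vec n" "w' \<in> carrier_vec n" unfolding v'_def w'_def by simp_all
  have "v' \<bullet> w' = qform n p" using v'w' by (simp add: p_split qform_append)
  also have "\<dots> = qform n (v @\<^sub>v w)"
    unfolding p_def by (rule qform_eo_mat[OF append_carrier_vec_double[OF mult.prems(1,2)] mult.hyps(2-4)])
  also have "\<dots> = 1" using mult.prems by (simp add: qform_append)
  finally have "v' \<bullet> w' = 1" .
  from mult.IH[OF v'w' this] obtain \<epsilon>2 where \<epsilon>2: "\<epsilon>2 \<in> En n" "vec_first (A *\<^sub>v p) n = rowmul v' \<epsilon>2"
    using p_split by auto
  from vec_first_eo_mat_in_E_orbit[OF n mult.prems mult.hyps(2-4)] obtain \<epsilon>1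
    where \<epsilon>1: "\<epsilon>1 \<in> En n" "v' = rowmul v \<epsilon>1"
    unfolding v'_def p_def by blast
  have "vec_first ((A * eo_mat n i j c) *\<^sub>v (v @\<^sub>v w)) n = rowmul v (\<epsilon>1 * \<epsilon>2)"
    using \<epsilon>1 \<epsilon>2 EO_carrier[OF mult.hyps(1)] mult.prems
    by (simp add: p_def assoc_mult_mat_vec_square append_carrier_vec_double
        rowmul_mult[OF En_carrier[OF \<epsilon>1(1)] En_carrier[OF \<epsilon>2(1)]])
  then show ?case using En_mult[OF \<epsilon>1(1) \<epsilon>2(1)] by blast
qed

lemma EO_realises_En:
  assumes "\<epsilon> \<in> En n"
  shows "\<exists>M\<in>EO n. \<forall>v\<in>carrier_vec n. \<forall>w\<in>carrier_vec n. vec_first (M *\<^sub>v (v @\<^sub>v w)) n = rowmul v \<epsilon>"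
  using assms
proof (induction \<epsilon> rule: En_induct)
  case one
  show ?case by (intro bexI[of _ "1\<^sub>m (2*n)"] EO_one) (simp add: append_carrier_vec_double vec_first_append rowmul_one)
next
  case (mult A i j c)
  from mult.IH obtain M where M: "M \<in> EO n"
    "\<And>v w. v \<in> carrier_vec n \<Longrightarrow> w \<in> carrier_vec n \<Longrightarrow> vec_first (M *\<^sub>v (v @\<^sub>v w)) n = rowmul v A"
    by blast
  have "vec_first ((eo_mat n j i c * M) *\<^sub>v (v @\<^sub>v w)) n
      = rowmul v (A * transvection n (c \<cdot>\<^sub>v unit_vec n i) (unit_vec n j))"
    if v: "v \<in> carrier_vec n" and w: "w \<in> carrier_vec n" for v w
  proof -
    define p where "p = M *\<^sub>v (v @\<^sub>v w)"
    have p: "p \<in> carrier_vec (2*n)"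
      unfolding p_def using EO_carrier[OF M(1)] v w by (simp add: append_carrier_vec_double)
    have vA: "rowmul v A \<in> carrier_vec n"
      using En_carrier[OF mult.hyps(1)] v by (simp add: rowmul_def)
    have "vec_first (eo_mat n j i c *\<^sub>v p) n
        = vec_first (eo_mat n j i c *\<^sub>v (rowmul v A @\<^sub>v vec_last p n)) n"
      using vec_first_last_double[OF p] M(2)[OF v w] by (simp add: p_def)
    also have "\<dots> = rowmul (rowmul v A) (transvection n (c \<cdot>\<^sub>v unit_vec n i) (unit_vec n j))"
      by (rule vec_first_eo_mat_low[OF vA vec_last_carrier mult.hyps(3,2)])
    also have "\<dots> = rowmul v (A * transvection n (c \<cdot>\<^sub>v unit_vec n i) (unit_vec n j))"
      by (rule rowmul_mult[OF En_carrier[OF mult.hyps(1)] transvection_carrier v])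
    finally show ?thesis
      using assoc_mult_mat_vec_square[OF eo_mat_carrier EO_carrier[OF M(1)] append_carrier_vec_double[OF v w]]
      by (simp add: p_def)
  qed
  moreover have "eo_mat n j i c * M \<in> EO n" using mult.hyps M(1) by (simp add: EO_mult eo_mat_in_EO)
  ultimately show ?case by blast
qed

definition dual_shifts :: "nat \<Rightarrow> 'a::comm_ring_1 vec \<Rightarrow> 'a vec set" where
  "dual_shifts n v = {d \<in> carrier_vec n. \<exists>M\<in>EO n. \<forall>z\<in>carrier_vec n. M *\<^sub>v (v @\<^sub>v z) = v @\<^sub>v (z + d)}"

context
  fixes n :: nat and v :: "'a::comm_ring_1 vec"
  assumes v: "v \<in> carrier_vec n"
begin

lemma zero_in_dual_shifts: "0\<^sub>v n \<in> dual_shifts n v"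
proof -
  have "1\<^sub>m (2*n) *\<^sub>v (v @\<^sub>v z) = v @\<^sub>v (z + 0\<^sub>v n)" if "z \<in> carrier_vec n" for z
    using that v by (simp add: append_carrier_vec_double)
  then show ?thesis unfolding dual_shifts_def using EO_one[of n] by auto
qed

lemma dual_shifts_add:
  assumes d: "d \<in> dual_shifts n v" and e: "e \<in> dual_shifts n v"
  shows "d + e \<in> dual_shifts n v"
proof -
  obtain M where M: "M \<in> EO n" "\<And>z. z \<in> carrier_vec n \<Longrightarrow> M *\<^sub>v (v @\<^sub>v z) = v @\<^sub>v (z + d)"
    and dc: "d \<in> carrier_vec n" using d unfolding dual_shifts_def by blast
  obtain N where N: "N \<in> EO n" "\<And>z. z \<in> carrier_vec n \<Longrightarrow> N *\<^sub>v (v @\<^sub>v z) = v @\<^sub>v (z + e)"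
    and ec: "e \<in> carrier_vec n" using e unfolding dual_shifts_def by blast
  have "(N * M) *\<^sub>v (v @\<^sub>v z) = v @\<^sub>v (z + (d + e))" if z: "z \<in> carrier_vec n" for z
    using M N z dc ec v EO_carrier[OF M(1)] EO_carrier[OF N(1)]
    by (simp add: assoc_mult_mat_vec_square append_carrier_vec_double assoc_add_vec)
  moreover have "d + e \<in> carrier_vec n" using dc ec by simp
  ultimately show ?thesis unfolding dual_shifts_def using EO_mult[OF N(1) M(1)] by blast
qed

lemma dual_shifts_sum:
  assumes "finite S" "\<And>s. s \<in> S \<Longrightarrow> f s \<in> dual_shifts n v"
  shows "vec n (\<lambda>k. \<Sum>s\<in>S. f s $ k) \<in> dual_shifts n v"
  using assms
proof (induction S rule: finite_induct)
  case empty
  have "vec n (\<lambda>k. \<Sum>s\<in>{}. f s $ k) = 0\<^sub>v n" by auto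
  then show ?case using zero_in_dual_shifts by simp
next
  case (insert x S)
  have "f x \<in> carrier_vec n" using insert.prems by (simp add: dual_shifts_def)
  then have "vec n (\<lambda>k. \<Sum>s\<in>insert x S. f s $ k) = f x + vec n (\<lambda>k. \<Sum>s\<in>S. f s $ k)"
    using insert.hyps by (intro eq_vecI) auto
  moreover have "vec n (\<lambda>k. \<Sum>s\<in>S. f s $ k) \<in> dual_shifts n v"
    using insert.IH insert.prems by blast
  ultimately show ?case using dual_shifts_add insert.prems by simp
qed

lemma skew_in_dual_shifts:
  assumes ij: "i < n" "j < n"
  shows "c \<cdot>\<^sub>v ((v $ j) \<cdot>\<^sub>v unit_vec n i - (v $ i) \<cdot>\<^sub>v unit_vec n j) \<in> dual_shifts n v"
proof -
  have "eo_mat n (i + n) j c *\<^sub>v (v @\<^sub>v z) = v @\<^sub>v (z + c \<cdot>\<^sub>v ((v $ j) \<cdot>\<^sub>v unit_vec n i - (v $ i) \<cdot>\<^sub>v unit_vec n j))"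
    if z: "z \<in> carrier_vec n" for z
  proof (rule eq_vecI)
    fix k assume "k < dim_vec (v @\<^sub>v (z + c \<cdot>\<^sub>v ((v $ j) \<cdot>\<^sub>v unit_vec n i - (v $ i) \<cdot>\<^sub>v unit_vec n j)))"
    then have k: "k < 2*n" using v by simp
    have ij': "i + n < 2*n" "j < 2*n" using ij by auto
    show "(eo_mat n (i + n) j c *\<^sub>v (v @\<^sub>v z)) $ k
        = (v @\<^sub>v (z + c \<cdot>\<^sub>v ((v $ j) \<cdot>\<^sub>v unit_vec n i - (v $ i) \<cdot>\<^sub>v unit_vec n j))) $ k"
      unfolding eo_mat_mult_vec_index[OF append_carrier_vec_double[OF v z] k ij']
      using v z k ij by (auto simp: hpart_def algebra_simps)
  qed (use v z in simp)
  moreover have "eo_mat n (i + n) j c \<in> EO n" using ij by (intro eo_mat_in_EO) auto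
  moreover have "c \<cdot>\<^sub>v ((v $ j) \<cdot>\<^sub>v unit_vec n i - (v $ i) \<cdot>\<^sub>v unit_vec n j) \<in> carrier_vec n" by simp
  ultimately show ?thesis unfolding dual_shifts_def by blast
qed

text \<open>Since \<open>v \<bullet> w = 1\<close> and \<open>v \<bullet> d = 0\<close>, one has
  \<open>d = (\<Sum>i j. (d\<^sub>i w\<^sub>j) (v\<^sub>j e\<^sub>i - v\<^sub>i e\<^sub>j))\<close>.\<close>

lemma orthogonal_in_dual_shifts:
  assumes w: "w \<in> carrier_vec n" "v \<bullet> w = 1" and d: "d \<in> carrier_vec n" "v \<bullet> d = 0"
  shows "d \<in> dual_shifts n v"
proof -
  define f where "f = (\<lambda>(i, j). (d $ i * w $ j) \<cdot>\<^sub>v ((v $ j) \<cdot>\<^sub>v unit_vec n i - (v $ i) \<cdot>\<^sub>v unit_vec n j))"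
  have "vec n (\<lambda>k. \<Sum>s\<in>{..<n} \<times> {..<n}. f s $ k) \<in> dual_shifts n v"
    by (rule dual_shifts_sum) (auto simp: f_def skew_in_dual_shifts)
  moreover have "vec n (\<lambda>k. \<Sum>s\<in>{..<n} \<times> {..<n}. f s $ k) = d"
  proof (rule eq_vecI)
    fix k assume "k < dim_vec d"
    then have k: "k < n" using d by simp
    have vw: "(\<Sum>j<n. w $ j * v $ j) = 1" and vd: "(\<Sum>i<n. d $ i * v $ i) = 0"
      using w d by (simp_all add: scalar_prod_def lessThan_atLeast0 mult.commute)
    have "(\<Sum>s\<in>{..<n} \<times> {..<n}. f s $ k)
        = (\<Sum>i<n. \<Sum>j<n. (if k = i then d $ i * (w $ j * v $ j) else 0) - (if k = j then w $ k * (d $ i * v $ i) else 0))"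
      unfolding sum.cartesian_product' f_def using k
      by (intro sum.cong refl) (auto simp: algebra_simps)
    also have "\<dots> = d $ k * (\<Sum>j<n. w $ j * v $ j) - w $ k * (\<Sum>i<n. d $ i * v $ i)"
      using k by (simp add: sum_subtractf sum_distrib_left sum.delta sum.swap[of _ "{..<n}" "{..<n}"])
    finally show "vec n (\<lambda>k. \<Sum>s\<in>{..<n} \<times> {..<n}. f s $ k) $ k = d $ k"
      using k vw vd by simp
  qed (use d in simp)
  ultimately show ?thesis by simp
qed

end

lemma EO_moves_dual_vector:
  assumes v: "v \<in> carrier_vec n" and w: "w \<in> carrier_vec n" "v \<bullet> w = 1"
    and w': "w' \<in> carrier_vec n" "v \<bullet> w' = 1"
  shows "\<exists>M\<in>EO n. M *\<^sub>v (v @\<^sub>v w) = v @\<^sub>v w'"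
proof -
  have "v \<bullet> (w' - w) = 0" using v w w' by (simp add: scalar_prod_minus_distrib[of _ n])
  then have "w' - w \<in> dual_shifts n v"
    using orthogonal_in_dual_shifts[OF v w] w w' by simp
  then obtain M where "M \<in> EO n" "M *\<^sub>v (v @\<^sub>v w) = v @\<^sub>v (w + (w' - w))"
    using w unfolding dual_shifts_def by blast
  moreover have "w + (w' - w) = w'" using w w' by (intro eq_vecI) auto
  ultimately show ?thesis by auto
qed

lemma sphere_in_EO_orbit_iff:
  assumes n: "3 \<le> n"
    and v1: "v1 \<in> carrier_vec n" "w1 \<in> carrier_vec n" "v1 \<bullet> w1 = 1"
    and v2: "v2 \<in> carrier_vec n" "w2 \<in> carrier_vec n" "v2 \<bullet> w2 = 1"
  shows "v2 @\<^sub>v w2 \<in> EO_orbit n (v1 @\<^sub>v w1) \<longleftrightarrow> (\<exists>\<epsilon>\<in>En n. v2 = rowmul v1 \<epsilon>)"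
proof
  assume "v2 @\<^sub>v w2 \<in> EO_orbit n (v1 @\<^sub>v w1)"
  then obtain M where "M \<in> EO n" "v2 @\<^sub>v w2 = M *\<^sub>v (v1 @\<^sub>v w1)" unfolding EO_orbit_def by blast
  then show "\<exists>\<epsilon>\<in>En n. v2 = rowmul v1 \<epsilon>"
    using EO_vec_first_in_E_orbit[OF n _ v1] vec_first_append[OF v2(1)] by metis
next
  assume "\<exists>\<epsilon>\<in>En n. v2 = rowmul v1 \<epsilon>"
  then obtain \<epsilon> where "\<epsilon> \<in> En n" "v2 = rowmul v1 \<epsilon>" by blast
  with EO_realises_En obtain M1 where M1: "M1 \<in> EO n" "vec_first (M1 *\<^sub>v (v1 @\<^sub>v w1)) n = v2"
    using v1 by blast
  define p where "p = M1 *\<^sub>v (v1 @\<^sub>v w1)"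
  have p: "p \<in> carrier_vec (2*n)"
    unfolding p_def using EO_carrier[OF M1(1)] v1 by (simp add: append_carrier_vec_double)
  then have p_split: "p = v2 @\<^sub>v vec_last p n"
    using M1(2) vec_first_last_double[OF p] by (simp add: p_def)
  have "v2 \<bullet> vec_last p n = qform n p" using v2 by (subst p_split) (simp add: qform_append)
  also have "\<dots> = 1"
    unfolding p_def using qform_EO[OF M1(1)] v1 by (simp add: append_carrier_vec_double qform_append)
  finally obtain M2 where M2: "M2 \<in> EO n" "M2 *\<^sub>v p = v2 @\<^sub>v w2"
    using EO_moves_dual_vector[OF v2(1) _ _ v2(2,3)] p_split by (metis vec_last_carrier)
  have "(M2 * M1) *\<^sub>v (v1 @\<^sub>v w1) = v2 @\<^sub>v w2"
    using M2 EO_carrier[OF M1(1)] EO_carrier[OF M2(1)] v1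
    by (simp add: p_def assoc_mult_mat_vec_square append_carrier_vec_double)
  then show "v2 @\<^sub>v w2 \<in> EO_orbit n (v1 @\<^sub>v w1)"
    unfolding EO_orbit_def using EO_mult[OF M2(1) M1(1)] by (intro CollectI exI[of _ "M2 * M1"]) simp
qed

lemma EO_orbit_eq:
  assumes p: "p \<in> carrier_vec (2*n)" and q: "q \<in> EO_orbit n p"
  shows "EO_orbit n q = EO_orbit n p"
proof -
  obtain M where M: "M \<in> EO n" "q = M *\<^sub>v p" using q unfolding EO_orbit_def by blast
  obtain M' where M': "M' \<in> EO n" "M' * M = 1\<^sub>m (2*n)" using EO_inverse[OF M(1)] by blast
  have Mc: "M \<in> carrier_mat (2*n) (2*n)" "M' \<in> carrier_mat (2*n) (2*n)"
    using M(1) M'(1) by (simp_all add: EO_carrier)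
  have act: "N *\<^sub>v q = (N * M) *\<^sub>v p" "N *\<^sub>v p = (N * M') *\<^sub>v q" if "N \<in> EO n" for N
  proof -
    have Nc: "N \<in> carrier_mat (2*n) (2*n)" using that by (rule EO_carrier)
    show "N *\<^sub>v q = (N * M) *\<^sub>v p" unfolding M(2) by (rule assoc_mult_mat_vec_square[OF Nc Mc(1) p, symmetric])
    have "(N * M') *\<^sub>v q = N *\<^sub>v ((M' * M) *\<^sub>v p)"
      unfolding M(2) using Nc Mc p by (simp add: assoc_mult_mat_vec_square)
    then show "N *\<^sub>v p = (N * M') *\<^sub>v q" using M'(2) p by simp
  qed
  show ?thesis
    unfolding EO_orbit_def using act EO_mult M(1) M'(1) by blast
qed

lemma EO_orbit_self: "p \<in> carrier_vec (2*n) \<Longrightarrow> p \<in> EO_orbit n p"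
  unfolding EO_orbit_def using EO_one by force

lemma E_orbit_eq:
  assumes v: "v \<in> carrier_vec n" and v': "v' \<in> E_orbit n v"
  shows "E_orbit n v' = E_orbit n v"
proof -
  obtain \<epsilon> where \<epsilon>: "\<epsilon> \<in> En n" "v' = rowmul v \<epsilon>" using v' unfolding E_orbit_def by blast
  obtain \<epsilon>' where \<epsilon>': "\<epsilon>' \<in> En n" "\<epsilon> * \<epsilon>' = 1\<^sub>m n" using En_inverse[OF \<epsilon>(1)] by blast
  have \<epsilon>c: "\<epsilon> \<in> carrier_mat n n" "\<epsilon>' \<in> carrier_mat n n"
    using \<epsilon>(1) \<epsilon>'(1) by (simp_all add: En_carrier)
  have act: "rowmul v' \<delta> = rowmul v (\<epsilon> * \<delta>)" "rowmul v \<delta> = rowmul v' (\<epsilon>' * \<delta>)"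
    if "\<delta> \<in> En n" for \<delta>
  proof -
    have \<delta>c: "\<delta> \<in> carrier_mat n n" using that by (rule En_carrier)
    show "rowmul v' \<delta> = rowmul v (\<epsilon> * \<delta>)" unfolding \<epsilon>(2) by (rule rowmul_mult[OF \<epsilon>c(1) \<delta>c v])
    have "rowmul v' (\<epsilon>' * \<delta>) = rowmul v ((\<epsilon> * \<epsilon>') * \<delta>)"
      unfolding \<epsilon>(2) using \<epsilon>c \<delta>c v by (simp add: rowmul_mult)
    then show "rowmul v \<delta> = rowmul v' (\<epsilon>' * \<delta>)" using \<epsilon>'(2) \<delta>c by simp
  qed
  show ?thesis
    unfolding E_orbit_def using act En_mult \<epsilon>(1) \<epsilon>'(1) by blast
qed

lemma E_orbit_self: "v \<in> carrier_vec n \<Longrightarrow> v \<in> E_orbit n v"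
  unfolding E_orbit_def using En_one rowmul_one by force

lemma sphere_orbits_eq_iff:
  assumes n: "3 \<le> n"
    and v: "v \<in> carrier_vec n" "w \<in> carrier_vec n" "v \<bullet> w = 1"
    and v': "v' \<in> carrier_vec n" "w' \<in> carrier_vec n" "v' \<bullet> w' = 1"
  shows "E_orbit n v = E_orbit n v' \<longleftrightarrow> EO_orbit n (v @\<^sub>v w) = EO_orbit n (v' @\<^sub>v w')"
proof -
  have "E_orbit n v = E_orbit n v' \<longleftrightarrow> v' \<in> E_orbit n v"
    using E_orbit_eq[OF v(1)] E_orbit_self[OF v'(1)] by blast
  also have "\<dots> \<longleftrightarrow> v' @\<^sub>v w' \<in> EO_orbit n (v @\<^sub>v w)"
    unfolding sphere_in_EO_orbit_iff[OF n v v'] E_orbit_def by blast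
  also have "\<dots> \<longleftrightarrow> EO_orbit n (v @\<^sub>v w) = EO_orbit n (v' @\<^sub>v w')"
    using EO_orbit_eq[OF append_carrier_vec_double[OF v(1,2)]]
      EO_orbit_self[OF append_carrier_vec_double[OF v'(1,2)]] by blast
  finally show ?thesis .
qed

lemma bij_betw_image_classes:
  assumes "\<And>s t. s \<in> S \<Longrightarrow> t \<in> S \<Longrightarrow> F (p s) = F (p t) \<longleftrightarrow> G (q s) = G (q t)"
  shows "\<exists>f. bij_betw f (F ` p ` S) (G ` q ` S) \<and> (\<forall>s\<in>S. f (F (p s)) = G (q s))"
proof -
  define f where "f X = G (q (SOME s. s \<in> S \<and> F (p s) = X))" for X
  have f: "f (F (p s)) = G (q s)" if "s \<in> S" for s
  proof -
    let ?t = "SOME t. t \<in> S \<and> F (p t) = F (p s)"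
    have "?t \<in> S \<and> F (p ?t) = F (p s)"
      using that by (intro someI_ex[of "\<lambda>t. t \<in> S \<and> F (p t) = F (p s)"]) blast
    then show ?thesis unfolding f_def using assms that by blast
  qed
  have "inj_on f (F ` p ` S)"
    by (rule inj_onI) (use assms f in auto)
  moreover have "f ` F ` p ` S = G ` q ` S"
    using f by (force simp: image_image)
  ultimately show ?thesis using f unfolding bij_betw_def by blast
qed

lemma bij_betw_E_orbits_sphere_orbits:
  assumes "3 \<le> n"
  shows "\<exists>f. bij_betw f (E_orbit n ` (Um n :: 'a::comm_ring_1 vec set)) (EO_orbit n ` USph n) \<and>
    (\<forall>v w. v \<in> carrier_vec n \<and> w \<in> carrier_vec n \<and> v \<bullet> w = 1 \<longrightarrow> f (E_orbit n v) = EO_orbit n (v @\<^sub>v w))"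
proof -
  define S where "S = {(v, w :: 'a vec). v \<in> carrier_vec n \<and> w \<in> carrier_vec n \<and> v \<bullet> w = 1}"
  have S: "Um n = fst ` S" "USph n = (\<lambda>(v, w). v @\<^sub>v w) ` S"
    unfolding Um_def USph_def S_def by force+
  have "E_orbit n (fst s) = E_orbit n (fst t)
      \<longleftrightarrow> EO_orbit n (case s of (v, w) \<Rightarrow> v @\<^sub>v w) = EO_orbit n (case t of (v, w) \<Rightarrow> v @\<^sub>v w)"
    if "s \<in> S" "t \<in> S" for s t
  proof -
    obtain v w v' w' where "s = (v, w)" "t = (v', w')" by fastforce
    then show ?thesis using that sphere_orbits_eq_iff[OF assms, of v w v' w'] unfolding S_def by simp
  qed
  from bij_betw_image_classes[of S "E_orbit n" fst "EO_orbit n" "\<lambda>(v, w). v @\<^sub>v w", OF this] obtain f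
    where "bij_betw f (E_orbit n ` fst ` S) (EO_orbit n ` (\<lambda>(v, w). v @\<^sub>v w) ` S)"
      and "\<forall>s\<in>S. f (E_orbit n (fst s)) = EO_orbit n (case s of (v, w) \<Rightarrow> v @\<^sub>v w)"
    by blast
  then show ?thesis unfolding S by (auto simp: S_def)
qed

theorem theorem4p4:
  fixes n :: nat
  assumes "n \<ge> 3"
  shows "(\<forall>(v1::'a::comm_ring_1 vec) w1 v2 w2.
            v1 \<in> carrier_vec n \<and> w1 \<in> carrier_vec n \<and> v1 \<bullet> w1 = 1 \<and>
            v2 \<in> carrier_vec n \<and> w2 \<in> carrier_vec n \<and> v2 \<bullet> w2 = 1 \<longrightarrow>
            ((v2 @\<^sub>v w2) \<in> Epin_orbit n (v1 @\<^sub>v w1) \<longleftrightarrow> (\<exists>\<epsilon> \<in> En n. v2 = rowmul v1 \<epsilon>)))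
       \<and> (\<exists>f. bij_betw f (E_orbit n ` (Um n :: 'a vec set)) (Epin_orbit n ` USph n) \<and>
              (\<forall>(v::'a vec) w. v \<in> carrier_vec n \<and> w \<in> carrier_vec n \<and> v \<bullet> w = 1 \<longrightarrow>
                  f (E_orbit n v) = Epin_orbit n (v @\<^sub>v w)))
       \<and> Epin_orbit n ` (USph n :: 'a vec set) = EO_orbit n ` USph n"
proof -
  note orbit_iff = sphere_in_EO_orbit_iff[OF assms]
  note bij = bij_betw_E_orbits_sphere_orbits[OF assms]
  show ?thesis unfolding Epin_orbit_eq_EO_orbit using orbit_iff bij by blast
qed

end
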